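(* Let $k$ be a field of characteristic zero. Every irreducible locally nilpotent derivation $\delta$ of $k[x,y]$ is the last term of a full irreducible C-chain, i.e. there is a sequence of irreducible LNDs $\delta_1=\frac{\partial}{\partial x},\ \delta_2=\frac{\partial}{\partial y},\ \delta_3,\dots,\delta_l=\delta$ such that for each $2\le i\le l-1$, $\delta_{i-1}$ and $\delta_i$ commute and $\delta_{i+1}=a_i\delta_{i-1}+b_i\delta_i$ with $a_i\in\mathrm{Ker}\,\delta_{i-1}\cap\mathrm{Ker}\,\delta_i$ and $b_i\in\mathrm{Ker}\,\delta_i$.
   Context: LND = locally nilpotent derivation; irreducible = image not contained in a proper principal ideal. (A derivation $\delta_{i+1}$ obtained in this way from commuting LNDs $\delta_{i-1},\delta_i$ is an LND commuting with $\delta_i$.) *)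

theory Defs
  imports "HOL-Computational_Algebra.Polynomial"
begin

text \<open>The polynomial ring k[x,y] is represented as ('a poly) poly = (k[x])[y]:
  the outer variable is y, the coefficients are polynomials in x.\<close>

type_synonym 'a bipoly = "'a poly poly"

definition const2 :: "'a::zero \<Rightarrow> 'a bipoly" where
  "const2 c = [:[:c:]:]"

definition is_derivation :: "('a::field bipoly \<Rightarrow> 'a bipoly) \<Rightarrow> bool" where
  "is_derivation D \<longleftrightarrow>
     (\<forall>f g. D (f + g) = D f + D g) \<and>
     (\<forall>c f. D (const2 c * f) = const2 c * D f) \<and>
     (\<forall>f g. D (f * g) = f * D g + g * D f)"

definition is_LND :: "('a::field bipoly \<Rightarrow> 'a bipoly) \<Rightarrow> bool" where
  "is_LND D \<longleftrightarrow> is_derivation D \<and> (\<forall>f. \<exists>n. (D ^^ n) f = 0)"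

definition irreducible_der :: "('a::field bipoly \<Rightarrow> 'a bipoly) \<Rightarrow> bool" where
  "irreducible_der D \<longleftrightarrow> \<not> (\<exists>h. \<not> is_unit h \<and> (\<forall>f. h dvd D f))"

definition ker_der :: "('a::field bipoly \<Rightarrow> 'a bipoly) \<Rightarrow> 'a bipoly set" where
  "ker_der D = {f. D f = 0}"

definition dx :: "'a::field bipoly \<Rightarrow> 'a bipoly" where
  "dx f = map_poly pderiv f"

definition dy :: "'a::field bipoly \<Rightarrow> 'a bipoly" where
  "dy f = pderiv f"

text \<open>Full irreducible C-chain (list ds = [\<delta>_1, ..., \<delta>_l], 0-indexed).\<close>
definition full_irreducible_C_chain :: "('a::field bipoly \<Rightarrow> 'a bipoly) list \<Rightarrow> bool" where
  "full_irreducible_C_chain ds \<longleftrightarrow>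
     2 \<le> length ds \<and> ds ! 0 = dx \<and> ds ! 1 = dy \<and>
     (\<forall>D \<in> set ds. is_LND D \<and> irreducible_der D) \<and>
     (\<forall>j. 1 \<le> j \<and> j + 1 < length ds \<longrightarrow>
        ds ! (j - 1) \<circ> ds ! j = ds ! j \<circ> ds ! (j - 1) \<and>
        (\<exists>a b. a \<in> ker_der (ds ! (j - 1)) \<inter> ker_der (ds ! j) \<and> b \<in> ker_der (ds ! j) \<and>
           ds ! (j + 1) = (\<lambda>f. a * (ds ! (j - 1)) f + b * (ds ! j) f)))"

end

(*
  Induction on deg x + deg y, where deg f is the largest n with \<delta>^n f \<noteq> 0. If \<delta> kills x or y,
  irreducibility forces \<delta> = c \<partial>/\<partial>y or \<delta> = c \<partial>/\<partial>x, and [\<partial>/\<partial>x, \<partial>/\<partial>y, \<delta>] is a full chain.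
  Otherwise, after possibly swapping x and y, 1 \<le> deg y \<le> deg x, and there is a substitution
  x \<mapsto> x - c y^k that lowers deg x (this is the heart of the argument). To find it, weight x and y
  by (deg x, deg y)/gcd: the leading forms of the divided powers \<delta>^N/N! are obtained by
  substituting the top divided powers \<alpha> of x and \<beta> of y into weighted leading parts, and a weighted
  homogeneous LND with coprime weights \<ge> 2 cannot have both components nonzero. This forces either
  weights (k, 1) and a relation \<alpha> = c \<beta>^k, or a triangular \<delta> with deg y = 1. Full chains are
  transported along the automorphisms used: conjugation preserves C-chains, and the conjugates of
  \<partial>/\<partial>x, \<partial>/\<partial>y extend [\<partial>/\<partial>x] (swap) resp. [\<partial>/\<partial>x, \<partial>/\<partial>y] (triangular) to full chains.
*)
theory Submission
  imports Defs
begin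

definition var_x :: "'a::comm_ring_1 bipoly" where
  "var_x = [:[:0, 1:]:]"

definition var_y :: "'a::comm_ring_1 bipoly" where
  "var_y = [:0, 1:]"

text \<open>\<open>coeff2 f i j\<close> is the coefficient of \<open>x\<^sup>i y\<^sup>j\<close>; note the reversed nesting of the
  representation.\<close>
definition coeff2 :: "'a::zero bipoly \<Rightarrow> nat \<Rightarrow> nat \<Rightarrow> 'a" where
  "coeff2 f i j = coeff (coeff f j) i"

definition monom2 :: "'a::comm_ring_1 \<Rightarrow> nat \<Rightarrow> nat \<Rightarrow> 'a bipoly" where
  "monom2 c i j = const2 c * var_x ^ i * var_y ^ j"

definition support2 :: "'a::zero bipoly \<Rightarrow> (nat \<times> nat) set" where
  "support2 f = {(i, j). coeff2 f i j \<noteq> 0}"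

definition x_degree_bound :: "'a::zero bipoly \<Rightarrow> nat" where
  "x_degree_bound f = (\<Sum>j\<le>degree f. degree (coeff f j))"

lemma const2_0 [simp]: "const2 0 = 0"
  by (simp add: const2_def)

lemma const2_1 [simp]: "const2 1 = 1"
  by (simp add: const2_def one_pCons)

lemma const2_add: "const2 (a + b) = const2 a + const2 b"
  by (simp add: const2_def)

lemma const2_mult: "const2 ((a::'a::comm_ring_1) * b) = const2 a * const2 b"
  by (simp add: const2_def)

lemma const2_diff: "const2 ((a::'a::comm_ring_1) - b) = const2 a - const2 b"
  by (simp add: const2_def)

lemma const2_power: "const2 ((a::'a::comm_ring_1) ^ n) = const2 a ^ n"
  by (induct n) (simp_all add: const2_mult)

lemma const2_of_nat: "const2 (of_nat n :: 'a::comm_ring_1) = of_nat n"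
  by (induct n) (simp_all add: const2_add)

lemma const2_eq_0_iff [simp]: "const2 a = 0 \<longleftrightarrow> a = 0"
  by (simp add: const2_def)

lemma const2_mult_eq_smult: "const2 c * f = smult [:c:] f"
  by (simp add: const2_def)

lemma var_x_neq_0 [simp]: "var_x \<noteq> (0::'a::comm_ring_1 bipoly)"
  by (simp add: var_x_def)

lemma var_y_neq_0 [simp]: "var_y \<noteq> (0::'a::comm_ring_1 bipoly)"
  by (simp add: var_y_def)

lemma coeff2_eqI: "(\<And>i j. coeff2 f i j = coeff2 g i j) \<Longrightarrow> f = g"
  by (metis coeff2_def poly_eqI)

lemma coeff2_0 [simp]: "coeff2 0 i j = 0"
  by (simp add: coeff2_def)

lemma coeff2_add [simp]: "coeff2 (f + g) i j = coeff2 f i j + coeff2 g i j"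
  by (simp add: coeff2_def)

lemma coeff2_const2_mult [simp]: "coeff2 (const2 c * f) i j = c * coeff2 f i j"
  by (simp add: coeff2_def const2_mult_eq_smult)

lemma coeff2_sum: "coeff2 (sum g A) i j = (\<Sum>x\<in>A. coeff2 (g x) i j)"
  by (induct A rule: infinite_finite_induct) simp_all

lemma coeff2_mult:
  "coeff2 (f * g) i j = (\<Sum>j1\<le>j. \<Sum>i1\<le>i. coeff2 f i1 j1 * coeff2 g (i - i1) (j - j1))"
  by (simp add: coeff2_def coeff_mult coeff_sum)

lemma coeff2_var_x_mult: "coeff2 (var_x * f) i j = (if i = 0 then 0 else coeff2 f (i - 1) j)"
proof -
  have "var_x * f = smult [:0, 1:] f"
    by (simp add: var_x_def)
  then show ?thesis
    by (simp add: coeff2_def coeff_pCons split: nat.splits)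
qed

lemma coeff2_var_y_mult: "coeff2 (var_y * f) i j = (if j = 0 then 0 else coeff2 f i (j - 1))"
proof -
  have "var_y * f = pCons 0 f"
    by (simp add: var_y_def)
  then show ?thesis
    by (simp add: coeff2_def coeff_pCons split: nat.splits)
qed

lemma coeff2_var_x_power_mult:
  "coeff2 (var_x ^ n * f) i j = (if n \<le> i then coeff2 f (i - n) j else 0)"
  by (induct n arbitrary: i) (auto simp: coeff2_var_x_mult mult.assoc)

lemma coeff2_var_y_power_mult:
  "coeff2 (var_y ^ n * f) i j = (if n \<le> j then coeff2 f i (j - n) else 0)"
  by (induct n arbitrary: j) (auto simp: coeff2_var_y_mult mult.assoc)

lemma coeff2_const2: "coeff2 (const2 c) i j = (if i = 0 \<and> j = 0 then c else 0)"
  by (simp add: coeff2_def const2_def coeff_pCons split: nat.splits)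

lemma coeff2_monom2: "coeff2 (monom2 c i j) i' j' = (if i' = i \<and> j' = j then c else 0)"
proof -
  have "monom2 c i j = var_y ^ j * (var_x ^ i * const2 c)"
    by (simp add: monom2_def ac_simps)
  then show ?thesis
    by (auto simp: coeff2_var_y_power_mult coeff2_var_x_power_mult coeff2_const2)
qed

lemma monomial_eq_monom2: "var_x ^ i * var_y ^ j = monom2 (1::'a::comm_ring_1) i j"
  by (simp add: monom2_def)

lemma coeff2_var_x: "coeff2 (var_x::'a::comm_ring_1 bipoly) i j = (if i = 1 \<and> j = 0 then 1 else 0)"
proof -
  have "var_x = monom2 (1::'a) 1 0"
    by (simp add: monom2_def)
  then show ?thesis
    by (metis coeff2_monom2)
qed

lemma coeff2_var_y: "coeff2 (var_y::'a::comm_ring_1 bipoly) i j = (if i = 0 \<and> j = 1 then 1 else 0)"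
proof -
  have "var_y = monom2 (1::'a) 0 1"
    by (simp add: monom2_def)
  then show ?thesis
    by (metis coeff2_monom2)
qed

lemma coeff2_nonzero_bound:
  assumes "coeff2 f i j \<noteq> 0"
  shows "i \<le> x_degree_bound f" "j \<le> degree f"
proof -
  show j: "j \<le> degree f"
    using assms by (metis coeff2_def coeff_0 le_degree)
  have "i \<le> degree (coeff f j)"
    using assms by (metis coeff2_def le_degree)
  also have "\<dots> \<le> x_degree_bound f"
    unfolding x_degree_bound_def by (rule member_le_sum) (use j in auto)
  finally show "i \<le> x_degree_bound f" .
qed

lemma finite_support2: "finite (support2 f)"
proof -
  have "support2 f \<subseteq> {..x_degree_bound f} \<times> {..degree f}"
    using coeff2_nonzero_bound by (auto simp: support2_def)
  then show ?thesis
    by (rule finite_subset) auto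
qed

lemma monom2_expansion: "f = (\<Sum>(i, j)\<in>support2 f. monom2 (coeff2 f i j) i j)"
proof (rule coeff2_eqI)
  fix i j
  have "coeff2 (\<Sum>(i', j')\<in>support2 f. monom2 (coeff2 f i' j') i' j') i j
      = (\<Sum>x\<in>support2 f. if x = (i, j) then coeff2 f i j else 0)"
    unfolding coeff2_sum by (rule sum.cong) (auto simp: coeff2_monom2 split: if_splits)
  also have "\<dots> = coeff2 f i j"
    using finite_support2[of f] by (simp add: sum.delta support2_def)
  finally show "coeff2 f i j = coeff2 (\<Sum>(i', j')\<in>support2 f. monom2 (coeff2 f i' j') i' j') i j"
    by simp
qed

text \<open>Only meaningful for finitely supported \<open>F\<close>.\<close>
definition bipoly_of :: "(nat \<Rightarrow> nat \<Rightarrow> 'a::zero) \<Rightarrow> 'a bipoly" where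
  "bipoly_of F = Abs_poly (\<lambda>j. Abs_poly (\<lambda>i. F i j))"

lemma coeff2_bipoly_of:
  assumes "\<And>i j. F i j \<noteq> 0 \<Longrightarrow> i \<le> n \<and> j \<le> m"
  shows "coeff2 (bipoly_of F) i j = F i j"
proof -
  have inner: "coeff (Abs_poly (\<lambda>i. F i j)) = (\<lambda>i. F i j)" for j
    by (rule coeff_Abs_poly[of n]) (use assms in force)
  have "Abs_poly (\<lambda>i. F i j) = 0" if "j > m" for j
    by (rule poly_eqI) (use assms that inner in force)
  then have outer: "coeff (Abs_poly (\<lambda>j. Abs_poly (\<lambda>i. F i j))) = (\<lambda>j. Abs_poly (\<lambda>i. F i j))"
    by (intro coeff_Abs_poly[of m]) auto
  show ?thesis
    by (simp add: coeff2_def bipoly_of_def outer inner)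
qed

lemma bipoly_induct:
  fixes P :: "'a::comm_ring_1 bipoly \<Rightarrow> bool"
  assumes const: "\<And>c. P (const2 c)" and x: "P var_x" and y: "P var_y"
    and add: "\<And>f g. P f \<Longrightarrow> P g \<Longrightarrow> P (f + g)"
    and mult: "\<And>f g. P f \<Longrightarrow> P g \<Longrightarrow> P (f * g)"
  shows "P f"
proof -
  have inner: "P [:c:]" for c :: "'a poly"
  proof (induct c rule: pCons_induct)
    case 0
    then show ?case using const[of 0] by (simp add: const2_def)
  next
    case (pCons a c)
    have "[:pCons a c:] = const2 a + var_x * [:c:]"
      by (simp add: const2_def var_x_def)
    then show ?case
      using add[OF const mult[OF x pCons(2)]] by simp
  qed
  show ?thesis
  proof (induct f rule: pCons_induct)
    case 0
    then show ?case using const[of 0] by simp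
  next
    case (pCons a f)
    have "pCons a f = [:a:] + var_y * f"
      by (simp add: var_y_def)
    then show ?case
      using add[OF inner mult[OF y pCons(2)]] by simp
  qed
qed

definition k_linear :: "('a::comm_ring_1 bipoly \<Rightarrow> 'a bipoly) \<Rightarrow> bool" where
  "k_linear T \<longleftrightarrow> (\<forall>f g. T (f + g) = T f + T g) \<and> (\<forall>c f. T (const2 c * f) = const2 c * T f)"

lemma k_linear_0: "k_linear T \<Longrightarrow> T 0 = 0"
  unfolding k_linear_def by (metis add_cancel_right_right add_0)

lemma k_linear_sum: "k_linear T \<Longrightarrow> T (sum g A) = (\<Sum>x\<in>A. T (g x))"
  by (induct A rule: infinite_finite_induct) (auto simp: k_linear_0 k_linear_def)

lemma k_linear_monom2_expansion:
  assumes "k_linear T"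
  shows "T f = (\<Sum>(i, j)\<in>support2 f. const2 (coeff2 f i j) * T (var_x ^ i * var_y ^ j))"
proof -
  have "T f = (\<Sum>x\<in>support2 f. T ((\<lambda>(i, j). monom2 (coeff2 f i j) i j) x))"
    by (subst monom2_expansion) (rule k_linear_sum[OF assms])
  also have "\<dots> = (\<Sum>(i, j)\<in>support2 f. const2 (coeff2 f i j) * T (var_x ^ i * var_y ^ j))"
    using assms by (intro sum.cong) (auto simp: monom2_def k_linear_def mult.assoc)
  finally show ?thesis .
qed

lemma k_linear_eq_on_monomials:
  assumes "k_linear S" "k_linear T"
    and "\<And>i j. coeff2 f i j \<noteq> 0 \<Longrightarrow> S (var_x ^ i * var_y ^ j) = T (var_x ^ i * var_y ^ j)"
  shows "S f = T f"
  using assms(3)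
  by (subst k_linear_monom2_expansion[OF assms(1)], subst k_linear_monom2_expansion[OF assms(2)])
    (intro sum.cong, auto simp: support2_def)

lemma k_linear_zero: "k_linear (\<lambda>_. 0)"
  by (simp add: k_linear_def)

lemma k_linear_comp: "k_linear S \<Longrightarrow> k_linear T \<Longrightarrow> k_linear (S \<circ> T)"
  by (simp add: k_linear_def)


declare funpow.simps(2) [simp del]

lemma funpow_Suc_outer: "(D ^^ Suc n) f = D ((D ^^ n) f)"
  by (simp add: funpow.simps(2))

lemma funpow_Suc_inner: "(D ^^ Suc n) f = (D ^^ n) (D f)"
  by (simp add: funpow_Suc_right)

lemma funpow_1 [simp]: "((D::'b \<Rightarrow> 'b) ^^ Suc 0) f = D f"
  by (simp add: funpow.simps(2))

context
  fixes D :: "'a::field_char_0 bipoly \<Rightarrow> 'a bipoly"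
  assumes der: "is_derivation D"
begin

lemma der_add: "D (f + g) = D f + D g"
  using der unfolding is_derivation_def by blast

lemma der_mult: "D (f * g) = f * D g + g * D f"
  using der unfolding is_derivation_def by blast

lemma der_const2_mult: "D (const2 c * f) = const2 c * D f"
  using der unfolding is_derivation_def by blast

lemma der_0 [simp]: "D 0 = 0"
  using der_add[of 0 0] by simp

lemma der_1 [simp]: "D 1 = 0"
  using der_mult[of 1 1] by simp

lemma der_const2 [simp]: "D (const2 c) = 0"
  using der_const2_mult[of c 1] by simp

lemma der_uminus: "D (- f) = - D f"
  using der_add[of f "- f"] by (simp add: add_eq_0_iff)

lemma der_diff: "D (f - g) = D f - D g"
  using der_add[of f "- g"] der_uminus[of g] by simp

lemma der_power: "D (f ^ Suc n) = of_nat (Suc n) * f ^ n * D f"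
  by (induct n) (simp_all add: der_mult algebra_simps)

lemma der_iter_add: "(D ^^ n) (f + g) = (D ^^ n) f + (D ^^ n) g"
  by (induct n) (simp_all add: der_add funpow_Suc_outer)

lemma der_iter_const2_mult: "(D ^^ n) (const2 c * f) = const2 c * (D ^^ n) f"
  by (induct n) (simp_all add: der_const2_mult funpow_Suc_outer)

lemma der_iter_0 [simp]: "(D ^^ n) 0 = 0"
  by (induct n) (simp_all add: funpow_Suc_outer)

lemma der_iter_diff: "(D ^^ n) (f - g) = (D ^^ n) f - (D ^^ n) g"
  by (induct n) (simp_all add: der_diff funpow_Suc_outer)

lemma k_linear_der_iter: "k_linear (D ^^ n)"
  by (simp add: k_linear_def der_iter_add der_iter_const2_mult)

lemma der_iter_vanishes_mono: "(D ^^ n) f = 0 \<Longrightarrow> n \<le> m \<Longrightarrow> (D ^^ m) f = 0"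
  by (metis funpow_add der_iter_0 le_add_diff_inverse2 comp_apply)

lemma der_iter_mult_kernel: "D g = 0 \<Longrightarrow> (D ^^ n) (f * g) = (D ^^ n) f * g"
  by (induct n) (simp_all add: der_mult funpow_Suc_outer)

lemma der_iter_Suc_mult: "(D ^^ Suc k) (f * g) = (D ^^ k) (f * D g) + (D ^^ k) (D f * g)"
  by (simp add: funpow_Suc_inner der_mult der_iter_add mult.commute)

lemma der_iter_leibniz_top:
  assumes "(D ^^ Suc m) f = 0" "(D ^^ Suc n) g = 0"
  shows "(D ^^ Suc (m + n)) (f * g) = 0 \<and>
    (D ^^ (m + n)) (f * g) = of_nat ((m + n) choose m) * (D ^^ m) f * (D ^^ n) g"
  using assms
proof (induct "m + n" arbitrary: m n f g rule: less_induct)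
  case less
  show ?case
  proof (cases m)
    case 0
    then have "D f = 0" using less(2) by simp
    then have "(D ^^ k) (f * g) = f * (D ^^ k) g" for k
      using der_iter_mult_kernel[of f k g] by (simp add: mult.commute)
    then show ?thesis using less(3) 0 by simp
  next
    case m: (Suc m')
    show ?thesis
    proof (cases n)
      case 0
      then have "D g = 0" using less(3) by simp
      then have "(D ^^ k) (f * g) = (D ^^ k) f * g" for k
        using der_iter_mult_kernel[of g k f] by simp
      then show ?thesis using less(2) 0 by simp
    next
      case n: (Suc n')
      have Dg: "(D ^^ Suc n') (D g) = 0" and Df: "(D ^^ Suc m') (D f) = 0"
        using less(2,3) m n by (simp_all add: funpow_Suc_inner[symmetric])
      have IH1: "(D ^^ Suc (m + n')) (f * D g) = 0 \<and>
          (D ^^ (m + n')) (f * D g) = of_nat ((m + n') choose m) * (D ^^ m) f * (D ^^ n) g"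
        using less(1)[of m n' f "D g"] less(2) Dg n by (simp add: funpow_Suc_inner)
      have IH2: "(D ^^ Suc (m' + n)) (D f * g) = 0 \<and>
          (D ^^ (m' + n)) (D f * g) = of_nat ((m' + n) choose m') * (D ^^ m) f * (D ^^ n) g"
        using less(1)[of m' n "D f" g] less(3) Df m by (simp add: funpow_Suc_inner)
      have sums: "m + n' = Suc (m' + n')" "m' + n = Suc (m' + n')" "m + n = Suc (Suc (m' + n'))"
        using m n by simp_all
      have step:
          "(D ^^ Suc (m + n)) (f * g) = (D ^^ Suc (m + n')) (f * D g)
            + (D ^^ Suc (m' + n)) (D f * g)"
          "(D ^^ (m + n)) (f * g) = (D ^^ (m + n')) (f * D g) + (D ^^ (m' + n)) (D f * g)"
        using der_iter_Suc_mult[of "Suc (m + n')"] der_iter_Suc_mult[of "m + n'"] sums by simp_all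
      have "(m + n) choose m = ((m + n') choose m) + ((m' + n) choose m')"
        using sums m by simp
      then have "(D ^^ (m + n)) (f * g) = of_nat ((m + n) choose m) * (D ^^ m) f * (D ^^ n) g"
        using step(2) IH1 IH2 by (simp only: of_nat_add distrib_right)
      then show ?thesis
        using step(1) IH1 IH2 by simp
    qed
  qed
qed

end

definition divided_power :: "('a::field_char_0 bipoly \<Rightarrow> 'a bipoly) \<Rightarrow> nat \<Rightarrow> 'a bipoly \<Rightarrow> 'a bipoly"
  where
  "divided_power D m f = const2 (inverse (fact m)) * (D ^^ m) f"

context
  fixes D :: "'a::field_char_0 bipoly \<Rightarrow> 'a bipoly"
  assumes der: "is_derivation D"
begin

lemma divided_power_eq_0_iff: "divided_power D m f = 0 \<longleftrightarrow> (D ^^ m) f = 0"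
  by (simp add: divided_power_def)

lemma divided_power_0 [simp]: "divided_power D 0 f = f"
  by (simp add: divided_power_def)

lemma divided_power_1: "divided_power D 1 f = D f"
  by (simp add: divided_power_def)

lemma divided_power_Suc:
  "divided_power D (Suc n) f = const2 (inverse (of_nat (Suc n))) * divided_power D n (D f)"
proof -
  have "inverse (fact (Suc n) :: 'a) = inverse (of_nat (Suc n)) * inverse (fact n)"
    by (simp del: of_nat_Suc add: field_simps)
  then show ?thesis
    by (simp add: divided_power_def funpow_Suc_inner const2_mult mult.assoc del: of_nat_Suc
      fact_Suc)
qed

lemma divided_power_diff: "divided_power D m (f - g) = divided_power D m f - divided_power D m g"
  by (simp add: divided_power_def der_iter_diff[OF der] right_diff_distrib)

lemma divided_power_const2_mult: "divided_power D m (const2 c * f) = const2 c * divided_power D m f"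
  by (simp add: divided_power_def der_iter_const2_mult[OF der] mult.left_commute)

lemma k_linear_divided_power: "k_linear (divided_power D m)"
  unfolding k_linear_def divided_power_def
  by (simp add: der_iter_add[OF der] der_iter_const2_mult[OF der] distrib_left mult.left_commute)

lemma divided_power_mult:
  assumes "(D ^^ Suc m) f = 0" "(D ^^ Suc n) g = 0"
  shows "(D ^^ Suc (m + n)) (f * g) = 0"
    and "divided_power D (m + n) (f * g) = divided_power D m f * divided_power D n g"
proof -
  note leibniz = der_iter_leibniz_top[OF der assms]
  show "(D ^^ Suc (m + n)) (f * g) = 0"
    using leibniz by blast
  have "(of_nat ((m + n) choose m) :: 'a) = fact (m + n) / (fact m * fact n)"
    using binomial_fact[of m "m + n"] by simp
  then have
      "inverse (fact (m + n)) * (of_nat ((m + n) choose m) :: 'a) = inverse (fact m)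
        * inverse (fact n)"
    by (simp add: field_simps)
  then have "const2 (inverse (fact (m + n))) * (of_nat ((m + n) choose m) :: 'a bipoly)
      = const2 (inverse (fact m)) * const2 (inverse (fact n))"
    by (metis const2_mult const2_of_nat)
  moreover have "(D ^^ (m + n)) (f * g) = of_nat ((m + n) choose m) * ((D ^^ m) f * (D ^^ n) g)"
    using leibniz by (simp add: mult.assoc)
  ultimately have "divided_power D (m + n) (f * g)
      = (const2 (inverse (fact m)) * const2 (inverse (fact n))) * ((D ^^ m) f * (D ^^ n) g)"
    unfolding divided_power_def by (metis mult.assoc)
  then show "divided_power D (m + n) (f * g) = divided_power D m f * divided_power D n g"
    unfolding divided_power_def by (simp only: mult_ac)
qed

lemma divided_power_power:
  assumes "(D ^^ Suc m) f = 0"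
  shows "(D ^^ Suc (k * m)) (f ^ k) = 0 \<and> divided_power D (k * m) (f ^ k) = divided_power D m f ^ k"
proof (induct k)
  case 0
  then show ?case by (simp add: der_1[OF der])
next
  case (Suc k)
  have "Suc k * m = m + k * m"
    by simp
  then show ?case
    using divided_power_mult[OF assms, of "k * m" "f ^ k"] Suc by simp
qed

end


lemma pderiv_var: "pderiv [:0, 1::'a::idom:] = 1"
  by (rule poly_eqI) (simp add: coeff_pderiv coeff_pCons split: nat.split)

lemma coeff_dx: "coeff (dx f) j = pderiv (coeff f j)"
  by (simp add: dx_def coeff_map_poly)

lemma pderiv_sum: "pderiv (sum g A) = (\<Sum>x\<in>A. pderiv (g x))"
  by (induct A rule: infinite_finite_induct) (simp_all add: pderiv_add)

lemma derivation_dx: "is_derivation (dx :: 'a::field_char_0 bipoly \<Rightarrow> _)"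
  unfolding is_derivation_def
proof (intro conjI allI)
  fix f g :: "'a bipoly"
  show "dx (f + g) = dx f + dx g"
    by (rule poly_eqI) (simp add: coeff_dx pderiv_add)
  have "dx (f * g) = f * dx g + dx f * g"
  proof (rule poly_eqI)
    fix n
    show "coeff (dx (f * g)) n = coeff (f * dx g + dx f * g) n"
      unfolding coeff_add coeff_mult coeff_dx pderiv_sum pderiv_mult sum.distrib[symmetric]
      by (rule sum.cong) (simp_all add: mult.commute)
  qed
  then show "dx (f * g) = f * dx g + g * dx f"
    by (simp add: mult.commute)
next
  fix c and f :: "'a bipoly"
  show "dx (const2 c * f) = const2 c * dx f"
    by (rule poly_eqI) (simp add: coeff_dx const2_mult_eq_smult pderiv_smult)
qed

lemma derivation_dy: "is_derivation (dy :: 'a::field_char_0 bipoly \<Rightarrow> _)"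
  unfolding is_derivation_def dy_def
  by (simp add: pderiv_add pderiv_mult const2_mult_eq_smult pderiv_smult)

lemma dx_var_x [simp]: "dx var_x = 1"
  by (simp add: dx_def var_x_def map_poly_pCons one_pCons pderiv_var)

lemma dx_var_y [simp]: "dx var_y = (0::'a::field_char_0 bipoly)"
  by (simp add: dx_def var_y_def map_poly_pCons one_pCons)

lemma dy_var_x [simp]: "dy var_x = 0"
  by (simp add: dy_def var_x_def)

lemma dy_var_y [simp]: "dy var_y = 1"
  unfolding dy_def var_y_def by (rule pderiv_var)

lemma coeff2_dx: "coeff2 (dx f) i j = of_nat (Suc i) * coeff2 f (Suc i) j"
  by (simp add: coeff2_def coeff_dx coeff_pderiv)

lemma coeff2_dy: "coeff2 (dy f) i j = of_nat (Suc j) * coeff2 f i (Suc j)"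
  by (simp add: coeff2_def dy_def coeff_pderiv of_nat_poly del: of_nat_Suc)

lemma dx_dy_commute: "dx \<circ> dy = dy \<circ> (dx :: 'a::field_char_0 bipoly \<Rightarrow> _)"
proof (rule ext)
  fix f :: "'a bipoly"
  show "(dx \<circ> dy) f = (dy \<circ> dx) f"
    by (rule poly_eqI) (simp add: coeff_dx dy_def coeff_pderiv pderiv_mult del: of_nat_Suc)
qed

definition der_xy :: "'a::field_char_0 bipoly \<Rightarrow> 'a bipoly \<Rightarrow> 'a bipoly \<Rightarrow> 'a bipoly" where
  "der_xy P Q f = dx f * P + dy f * Q"

lemma derivation_der_xy: "is_derivation (der_xy P Q)"
  unfolding is_derivation_def der_xy_def
  by (simp add: der_add[OF derivation_dx] der_add[OF derivation_dy]
      der_mult[OF derivation_dx] der_mult[OF derivation_dy]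
      der_const2_mult[OF derivation_dx] der_const2_mult[OF derivation_dy]
      der_const2[OF derivation_dx] der_const2[OF derivation_dy] algebra_simps)

lemma der_xy_var_x [simp]: "der_xy P Q var_x = P"
  and der_xy_var_y [simp]: "der_xy P Q var_y = Q"
  by (simp_all add: der_xy_def)

lemma derivation_eqI:
  fixes D1 D2 :: "'a::field_char_0 bipoly \<Rightarrow> 'a bipoly"
  assumes "is_derivation D1" "is_derivation D2" "D1 var_x = D2 var_x" "D1 var_y = D2 var_y"
  shows "D1 = D2"
proof
  fix f
  show "D1 f = D2 f"
    by (induct f rule: bipoly_induct)
      (use assms in \<open>simp_all add: der_add der_mult\<close>)
qed

lemma derivation_eq_der_xy: "is_derivation D \<Longrightarrow> D = der_xy (D var_x) (D var_y)"
  by (rule derivation_eqI) (simp_all add: derivation_der_xy)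

lemma der_iter_vanishes_sum:
  fixes D :: "'a::field_char_0 bipoly \<Rightarrow> 'a bipoly"
  assumes der: "is_derivation D" and "finite A" and "\<And>x. x \<in> A \<Longrightarrow> \<exists>n. (D ^^ n) (g x) = 0"
  shows "\<exists>n. (D ^^ n) (sum g A) = 0"
  using assms(2,3)
proof (induct A rule: finite_induct)
  case empty
  then show ?case by (auto simp: der_iter_0[OF der])
next
  case (insert x A)
  obtain n1 n2 where "(D ^^ n1) (g x) = 0" "(D ^^ n2) (sum g A) = 0"
    using insert by blast
  then have "(D ^^ max n1 n2) (g x) = 0" "(D ^^ max n1 n2) (sum g A) = 0"
    using der_iter_vanishes_mono[OF der] by (metis max.cobounded1 max.cobounded2)+
  then show ?case
    using insert.hyps by (auto simp: der_iter_add[OF der] intro!: exI[of _ "max n1 n2"])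
qed

lemma is_LND_of_monomials:
  fixes D :: "'a::field_char_0 bipoly \<Rightarrow> 'a bipoly"
  assumes der: "is_derivation D" and "\<And>i j. \<exists>n. (D ^^ n) (var_x ^ i * var_y ^ j) = 0"
  shows "is_LND D"
  unfolding is_LND_def
proof (intro conjI allI der)
  fix f
  show "\<exists>n. (D ^^ n) f = 0"
    by (subst monom2_expansion, rule der_iter_vanishes_sum[OF der finite_support2])
      (auto simp: monom2_def der_iter_const2_mult[OF der] mult.assoc assms(2))
qed

lemma is_LND_of_generators:
  fixes D :: "'a::field_char_0 bipoly \<Rightarrow> 'a bipoly"
  assumes der: "is_derivation D" and "(D ^^ Suc m) var_x = 0" and "(D ^^ Suc n) var_y = 0"
  shows "is_LND D"
proof (rule is_LND_of_monomials[OF der])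
  fix i j
  have "(D ^^ Suc (i * m)) (var_x ^ i) = 0" "(D ^^ Suc (j * n)) (var_y ^ j) = 0"
    using divided_power_power[OF der assms(2)] divided_power_power[OF der assms(3)] by blast+
  then show "\<exists>k. (D ^^ k) (var_x ^ i * var_y ^ j) = 0"
    using divided_power_mult(1)[OF der] by blast
qed

lemma is_LND_dx: "is_LND (dx :: 'a::field_char_0 bipoly \<Rightarrow> _)"
  by (rule is_LND_of_generators[OF derivation_dx, of 1 0])
    (simp_all add: funpow_Suc_outer der_1[OF derivation_dx])

lemma is_LND_dy: "is_LND (dy :: 'a::field_char_0 bipoly \<Rightarrow> _)"
  by (rule is_LND_of_generators[OF derivation_dy, of 0 1])
    (simp_all add: funpow_Suc_outer der_1[OF derivation_dy])

lemma irreducible_der_if_hits_1: "E f = 1 \<Longrightarrow> irreducible_der E"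
  unfolding irreducible_der_def by metis

lemma irreducible_der_dx: "irreducible_der (dx :: 'a::field_char_0 bipoly \<Rightarrow> _)"
  by (rule irreducible_der_if_hits_1[of _ var_x]) simp

lemma irreducible_der_dy: "irreducible_der (dy :: 'a::field_char_0 bipoly \<Rightarrow> _)"
  by (rule irreducible_der_if_hits_1[of _ var_y]) simp

lemma is_unit_bipoly_iff: "is_unit (h :: 'a::field bipoly) \<longleftrightarrow> (\<exists>a. a \<noteq> 0 \<and> h = const2 a)"
  by (auto simp: is_unit_poly_iff const2_def dvd_field_iff)


section \<open>The degree function of a locally nilpotent derivation\<close>

text \<open>\<open>lnd_deg D f\<close> is the largest \<open>n\<close> with \<open>D\<^sup>n f \<noteq> 0\<close>, and \<open>0\<close> for \<open>f = 0\<close>.\<close>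
definition lnd_deg :: "('a::field_char_0 bipoly \<Rightarrow> 'a bipoly) \<Rightarrow> 'a bipoly \<Rightarrow> nat" where
  "lnd_deg D f = (LEAST m. (D ^^ Suc m) f = 0)"

context
  fixes D :: "'a::field_char_0 bipoly \<Rightarrow> 'a bipoly"
  assumes lnd: "is_LND D"
begin

lemma is_LND_derivation: "is_derivation D"
  using lnd by (simp add: is_LND_def)

lemma der_iter_lnd_deg_Suc: "(D ^^ Suc (lnd_deg D f)) f = 0"
proof -
  obtain n where "(D ^^ n) f = 0"
    using lnd by (auto simp: is_LND_def)
  then have "(D ^^ Suc n) f = 0"
    using der_iter_vanishes_mono[OF is_LND_derivation, of n f "Suc n"] by simp
  then show ?thesis
    unfolding lnd_deg_def by (rule LeastI)
qed

lemma lnd_deg_le: "(D ^^ Suc n) f = 0 \<Longrightarrow> lnd_deg D f \<le> n"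
  unfolding lnd_deg_def by (rule Least_le)

lemma der_iter_lnd_deg_neq_0: "f \<noteq> 0 \<Longrightarrow> (D ^^ lnd_deg D f) f \<noteq> 0"
  using lnd_deg_le by (cases "lnd_deg D f") fastforce+

lemma der_iter_eq_0_iff: "(D ^^ n) f = 0 \<longleftrightarrow> f = 0 \<or> lnd_deg D f < n"
proof
  assume "(D ^^ n) f = 0"
  then show "f = 0 \<or> lnd_deg D f < n"
    using der_iter_vanishes_mono[OF is_LND_derivation] der_iter_lnd_deg_neq_0
    by (meson not_less)
next
  assume "f = 0 \<or> lnd_deg D f < n"
  then show "(D ^^ n) f = 0"
    using der_iter_vanishes_mono[OF is_LND_derivation der_iter_lnd_deg_Suc, of f n]
    by (auto simp: der_iter_0[OF is_LND_derivation])
qed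

lemma lnd_deg_mult:
  assumes "f \<noteq> 0" "g \<noteq> 0"
  shows "lnd_deg D (f * g) = lnd_deg D f + lnd_deg D g"
proof -
  note leibniz =
    der_iter_leibniz_top[OF is_LND_derivation der_iter_lnd_deg_Suc der_iter_lnd_deg_Suc, of f g]
  have "of_nat ((lnd_deg D f + lnd_deg D g) choose lnd_deg D f) \<noteq> (0::'a bipoly)"
    by simp
  then have "(D ^^ (lnd_deg D f + lnd_deg D g)) (f * g) \<noteq> 0"
    using leibniz der_iter_lnd_deg_neq_0 assms by simp
  then show ?thesis
    using leibniz lnd_deg_le der_iter_eq_0_iff by (meson antisym not_less)
qed

lemma lnd_deg_0 [simp]: "lnd_deg D 0 = 0"
  using lnd_deg_le[of 0 0] der_0[OF is_LND_derivation] by simp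

lemma lnd_deg_eq_0_iff: "lnd_deg D f = 0 \<longleftrightarrow> D f = 0"
  using der_iter_eq_0_iff[of 1 f] der_0[OF is_LND_derivation] by auto

lemma lnd_deg_der: "lnd_deg D (D f) = lnd_deg D f - 1"
proof (cases "D f = 0")
  case True
  then show ?thesis
    using lnd_deg_eq_0_iff[of f] lnd_deg_eq_0_iff[of 0] by simp
next
  case False
  then have f: "f \<noteq> 0"
    using der_0[OF is_LND_derivation] by auto
  have "lnd_deg D (D f) < n \<longleftrightarrow> lnd_deg D f < Suc n" for n
    using der_iter_eq_0_iff[of n "D f"] der_iter_eq_0_iff[of "Suc n" f] False f
    by (simp add: funpow_Suc_inner)
  from this[of "Suc (lnd_deg D (D f))"] this[of "lnd_deg D (D f)"] show ?thesis
    by linarith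
qed

lemma lnd_kernel_factor: "D (f * g) = 0 \<Longrightarrow> f \<noteq> 0 \<Longrightarrow> g \<noteq> 0 \<Longrightarrow> D f = 0"
  using lnd_deg_mult[of f g] lnd_deg_eq_0_iff[of "f * g"] lnd_deg_eq_0_iff[of f] by simp

end


section \<open>Weighted degrees\<close>

definition wdeg :: "nat \<Rightarrow> nat \<Rightarrow> nat \<Rightarrow> nat \<Rightarrow> int" where
  "wdeg p q i j = int (p * i + q * j)"

definition wdeg_le :: "nat \<Rightarrow> nat \<Rightarrow> int \<Rightarrow> 'a::zero bipoly \<Rightarrow> bool" where
  "wdeg_le p q M f \<longleftrightarrow> (\<forall>i j. coeff2 f i j \<noteq> 0 \<longrightarrow> wdeg p q i j \<le> M)"

definition wcomp :: "nat \<Rightarrow> nat \<Rightarrow> int \<Rightarrow> 'a::zero bipoly \<Rightarrow> 'a bipoly" where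
  "wcomp p q M f = bipoly_of (\<lambda>i j. if wdeg p q i j = M then coeff2 f i j else 0)"

definition whomog :: "nat \<Rightarrow> nat \<Rightarrow> int \<Rightarrow> 'a::zero bipoly \<Rightarrow> bool" where
  "whomog p q M f \<longleftrightarrow> wcomp p q M f = f"

lemma wdeg_le_nat_iff: "wdeg p q i j \<le> int N \<longleftrightarrow> p * i + q * j \<le> N"
  and wdeg_eq_nat_iff: "wdeg p q i j = int N \<longleftrightarrow> p * i + q * j = N"
  by (simp_all only: wdeg_def of_nat_le_iff of_nat_eq_iff)

lemma wdeg_leD: "wdeg_le p q M f \<Longrightarrow> coeff2 f i j \<noteq> 0 \<Longrightarrow> wdeg p q i j \<le> M"
  by (simp add: wdeg_le_def)

lemma wdeg_leI: "(\<And>i j. coeff2 f i j \<noteq> 0 \<Longrightarrow> wdeg p q i j \<le> M) \<Longrightarrow> wdeg_le p q M f"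
  by (simp add: wdeg_le_def)

lemma coeff2_wcomp: "coeff2 (wcomp p q M f) i j = (if wdeg p q i j = M then coeff2 f i j else 0)"
  unfolding wcomp_def
  by (rule coeff2_bipoly_of[of _ "x_degree_bound f" "degree f"])
    (auto split: if_splits dest: coeff2_nonzero_bound)

lemma wcomp_add [simp]: "wcomp p q M (f + g) = wcomp p q M f + wcomp p q M g"
  and wcomp_const2_mult [simp]: "wcomp p q M (const2 c * f) = const2 c * wcomp p q M f"
  and wcomp_0 [simp]: "wcomp p q M 0 = 0"
  by (rule coeff2_eqI; simp add: coeff2_wcomp)+

lemma k_linear_wcomp: "k_linear (wcomp p q M)"
  by (simp add: k_linear_def)

lemma wdeg_le_add: "wdeg_le p q M f \<Longrightarrow> wdeg_le p q M g \<Longrightarrow> wdeg_le p q M (f + g)"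
  by (rule wdeg_leI) (case_tac "coeff2 f i j = 0"; auto dest: wdeg_leD)

lemma wdeg_le_0 [simp]: "wdeg_le p q M 0"
  by (simp add: wdeg_le_def)

lemma wdeg_le_mono: "wdeg_le p q M f \<Longrightarrow> M \<le> M' \<Longrightarrow> wdeg_le p q M' f"
  unfolding wdeg_le_def by force

lemma whomog_iff: "whomog p q M f \<longleftrightarrow> (\<forall>i j. coeff2 f i j \<noteq> 0 \<longrightarrow> wdeg p q i j = M)"
  unfolding whomog_def
  by (metis coeff2_eqI coeff2_wcomp)

lemma whomogD: "whomog p q M f \<Longrightarrow> coeff2 f i j \<noteq> 0 \<Longrightarrow> int (p * i + q * j) = M"
  unfolding whomog_iff wdeg_def by blast

lemma whomog_wdeg_le: "whomog p q M f \<Longrightarrow> wdeg_le p q M f"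
  by (simp add: whomog_iff wdeg_le_def)

lemma whomog_wcomp: "whomog p q M (wcomp p q M f)"
  by (simp add: whomog_iff coeff2_wcomp)

lemma wcomp_whomog_other: "whomog p q M f \<Longrightarrow> M \<noteq> M' \<Longrightarrow> wcomp p q M' f = 0"
  by (rule coeff2_eqI) (auto simp: coeff2_wcomp whomog_iff)

lemma whomog_monomial: "whomog p q (wdeg p q i j) (var_x ^ i * var_y ^ j)"
  by (simp add: whomog_iff monomial_eq_monom2 coeff2_monom2)

lemma whomog_var_x: "whomog p q (int p) var_x"
  and whomog_var_y: "whomog p q (int q) var_y"
  by (simp_all add: whomog_iff coeff2_var_x coeff2_var_y wdeg_def)

lemma wdeg_split:
  assumes "i1 \<le> i" "j1 \<le> j"
  shows "wdeg p q i j = wdeg p q i1 j1 + wdeg p q (i - i1) (j - j1)"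
proof -
  obtain a b where "i = i1 + a" "j = j1 + b"
    using assms le_Suc_ex by blast
  then show ?thesis
    unfolding wdeg_def by (simp add: distrib_left)
qed

lemma wdeg_Suc_left: "wdeg p q (Suc i) j = wdeg p q i j + int p"
  and wdeg_Suc_right: "wdeg p q i (Suc j) = wdeg p q i j + int q"
  by (simp_all add: wdeg_def)

lemma wdeg_le_mult:
  fixes f g :: "'a::idom bipoly"
  assumes f: "wdeg_le p q M1 f" and g: "wdeg_le p q M2 g"
  shows "wdeg_le p q (M1 + M2) (f * g)"
    and "wcomp p q (M1 + M2) (f * g) = wcomp p q M1 f * wcomp p q M2 g"
proof -
  show "wdeg_le p q (M1 + M2) (f * g)"
  proof (rule wdeg_leI)
    fix i j
    assume "coeff2 (f * g) i j \<noteq> 0"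
    then obtain j1 i1 where ij: "j1 \<le> j" "i1 \<le> i"
      and "coeff2 f i1 j1 * coeff2 g (i - i1) (j - j1) \<noteq> 0"
      unfolding coeff2_mult by (auto elim!: sum.not_neutral_contains_not_neutral)
    then have "coeff2 f i1 j1 \<noteq> 0" "coeff2 g (i - i1) (j - j1) \<noteq> 0"
      by auto
    then have "wdeg p q i1 j1 \<le> M1" "wdeg p q (i - i1) (j - j1) \<le> M2"
      using wdeg_leD[OF f] wdeg_leD[OF g] by blast+
    then show "wdeg p q i j \<le> M1 + M2"
      using wdeg_split[OF ij(2,1), of p q] by simp
  qed
  show "wcomp p q (M1 + M2) (f * g) = wcomp p q M1 f * wcomp p q M2 g"
  proof (rule coeff2_eqI)
    fix i j
    have summand: "(if wdeg p q i1 j1 = M1 then coeff2 f i1 j1 else 0) *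
        (if wdeg p q (i - i1) (j - j1) = M2 then coeff2 g (i - i1) (j - j1) else 0)
      = (if wdeg p q i j = M1 + M2 then coeff2 f i1 j1 * coeff2 g (i - i1) (j - j1) else 0)"
      if "i1 \<le> i" "j1 \<le> j" for i1 j1
      using wdeg_leD[OF f, of i1 j1] wdeg_leD[OF g, of "i - i1" "j - j1"]
        wdeg_split[OF that, of p q]
      by (cases "coeff2 f i1 j1 * coeff2 g (i - i1) (j - j1) = 0") auto
    show "coeff2 (wcomp p q (M1 + M2) (f * g)) i j = coeff2 (wcomp p q M1 f * wcomp p q M2 g) i j"
      unfolding coeff2_wcomp coeff2_mult using summand
      by (auto intro!: sum.cong simp: sum.neutral)
  qed
qed

lemma wdeg_le_dx:
  assumes "wdeg_le p q M f"
  shows "wdeg_le p q (M - int p) (dx f)" "wcomp p q (M - int p) (dx f) = dx (wcomp p q M f)"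
proof -
  show "wdeg_le p q (M - int p) (dx f)"
    by (rule wdeg_leI) (use wdeg_leD[OF assms] in \<open>force simp: coeff2_dx wdeg_Suc_left\<close>)
  show "wcomp p q (M - int p) (dx f) = dx (wcomp p q M f)"
    by (rule coeff2_eqI) (auto simp: coeff2_dx coeff2_wcomp wdeg_Suc_left)
qed

lemma wdeg_le_dy:
  assumes "wdeg_le p q M f"
  shows "wdeg_le p q (M - int q) (dy f)" "wcomp p q (M - int q) (dy f) = dy (wcomp p q M f)"
proof -
  show "wdeg_le p q (M - int q) (dy f)"
    by (rule wdeg_leI) (use wdeg_leD[OF assms] in \<open>force simp: coeff2_dy wdeg_Suc_right\<close>)
  show "wcomp p q (M - int q) (dy f) = dy (wcomp p q M f)"
    by (rule coeff2_eqI) (auto simp: coeff2_dy coeff2_wcomp wdeg_Suc_right)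
qed

lemma wdeg_le_der_xy:
  assumes P: "wdeg_le p q (int p + e) P" and Q: "wdeg_le p q (int q + e) Q" and f: "wdeg_le p q M f"
  shows "wdeg_le p q (M + e) (der_xy P Q f)"
    and "wcomp p q (M + e) (der_xy P Q f)
      = der_xy (wcomp p q (int p + e) P) (wcomp p q (int q + e) Q) (wcomp p q M f)"
proof -
  have M: "M + e = (M - int p) + (int p + e)" "M + e = (M - int q) + (int q + e)"
    by simp_all
  note dxP = wdeg_le_mult[OF wdeg_le_dx(1)[OF f] P] and dyQ = wdeg_le_mult[OF wdeg_le_dy(1)[OF f] Q]
  show "wdeg_le p q (M + e) (der_xy P Q f)"
    unfolding der_xy_def by (rule wdeg_le_add) (subst M(1), rule dxP(1), subst M(2), rule dyQ(1))
  show "wcomp p q (M + e) (der_xy P Q f)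
      = der_xy (wcomp p q (int p + e) P) (wcomp p q (int q + e) Q) (wcomp p q M f)"
    unfolding der_xy_def wcomp_add by (subst M(1), subst dxP(2), subst M(2), subst dyQ(2))
      (simp add: wdeg_le_dx(2)[OF f] wdeg_le_dy(2)[OF f])
qed

lemma wdeg_le_der_xy_iter:
  assumes P: "wdeg_le p q (int p + e) P" and Q: "wdeg_le p q (int q + e) Q" and f: "wdeg_le p q M f"
  shows "wdeg_le p q (M + int n * e) ((der_xy P Q ^^ n) f) \<and>
    wcomp p q (M + int n * e) ((der_xy P Q ^^ n) f)
      = (der_xy (wcomp p q (int p + e) P) (wcomp p q (int q + e) Q) ^^ n) (wcomp p q M f)"
proof (induct n)
  case 0
  then show ?case using f by simp
next
  case (Suc n)
  have M: "M + int (Suc n) * e = (M + int n * e) + e"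
    by (simp add: algebra_simps)
  show ?case
    unfolding M funpow_Suc_outer
    using wdeg_le_der_xy[OF P Q Suc[THEN conjunct1]] Suc[THEN conjunct2]
    by simp
qed

lemma whomog_der_xy_iter:
  assumes A: "whomog p q (int p + e) A" and B: "whomog p q (int q + e) B" and f: "whomog p q M f"
  shows "whomog p q (M + int n * e) ((der_xy A B ^^ n) f)"
  using wdeg_le_der_xy_iter[OF whomog_wdeg_le[OF A] whomog_wdeg_le[OF B] whomog_wdeg_le[OF f]]
    A B f
  by (simp add: whomog_def)

lemma is_LND_leading_part:
  assumes D: "is_LND (der_xy P Q)" and P: "wdeg_le p q (int p + e) P"
    and Q: "wdeg_le p q (int q + e) Q"
  shows "is_LND (der_xy (wcomp p q (int p + e) P) (wcomp p q (int q + e) Q))"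
proof (rule is_LND_of_monomials[OF derivation_der_xy])
  fix i j
  let ?m = "var_x ^ i * var_y ^ j :: 'a bipoly"
  obtain n where "(der_xy P Q ^^ n) ?m = 0"
    using D by (auto simp: is_LND_def)
  then show "\<exists>n. (der_xy (wcomp p q (int p + e) P) (wcomp p q (int q + e) Q) ^^ n) ?m = 0"
    using wdeg_le_der_xy_iter[OF P Q whomog_wdeg_le[OF whomog_monomial], of i j n]
      whomog_monomial[of p q i j, unfolded whomog_def] by (metis wcomp_0)
qed


section \<open>Substitutions, automorphisms and conjugate derivations\<close>

lemma map_poly_add_hom:
  assumes "h 0 = 0" "\<And>a b. h (a + b) = h a + h b"
  shows "map_poly h (p + q) = map_poly h p + map_poly h q"
  by (rule poly_eqI) (simp add: coeff_map_poly assms)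

lemma map_poly_mult_hom:
  fixes h :: "'a::comm_semiring_0 \<Rightarrow> 'b::comm_semiring_0"
  assumes h0: "h 0 = 0" and add: "\<And>a b. h (a + b) = h a + h b"
    and mult: "\<And>a b. h (a * b) = h a * h b"
  shows "map_poly h (p * q) = map_poly h p * map_poly h q"
proof (induct p rule: pCons_induct)
  case 0
  then show ?case by simp
next
  case (pCons a p)
  have "map_poly h (pCons a p * q) = smult (h a) (map_poly h q)
      + pCons 0 (map_poly h p * map_poly h q)"
    by (simp add: map_poly_add_hom[OF h0 add] map_poly_smult h0 mult map_poly_pCons pCons.hyps)
  also have "\<dots> = map_poly h (pCons a p) * map_poly h q"
    by (simp add: map_poly_pCons h0)
  finally show ?case .
qed

definition subst_x :: "'a::comm_ring_1 bipoly \<Rightarrow> 'a poly \<Rightarrow> 'a bipoly" where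
  "subst_x U c = poly (map_poly const2 c) U"

text \<open>\<open>subst_xy U V f = f(U, V)\<close>.\<close>
definition subst_xy :: "'a::comm_ring_1 bipoly \<Rightarrow> 'a bipoly \<Rightarrow> 'a bipoly \<Rightarrow> 'a bipoly" where
  "subst_xy U V f = poly (map_poly (subst_x U) f) V"

lemma subst_x_add: "subst_x U (a + b) = subst_x U a + subst_x U b"
  and subst_x_mult: "subst_x U (a * b) = subst_x U a * subst_x U b"
  by (simp_all add: subst_x_def map_poly_add_hom map_poly_mult_hom const2_add const2_mult)

lemma subst_x_0 [simp]: "subst_x U 0 = 0"
  by (simp add: subst_x_def)

lemma subst_xy_add: "subst_xy U V (f + g) = subst_xy U V f + subst_xy U V g"
  and subst_xy_mult: "subst_xy U V (f * g) = subst_xy U V f * subst_xy U V g"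
  by (simp_all add: subst_xy_def map_poly_add_hom map_poly_mult_hom subst_x_add subst_x_mult)

lemma subst_xy_0 [simp]: "subst_xy U V 0 = 0"
  and subst_xy_1 [simp]: "subst_xy U V 1 = 1"
  and subst_xy_const2 [simp]: "subst_xy U V (const2 c) = const2 c"
  and subst_xy_var_x [simp]: "subst_xy U V var_x = U"
  and subst_xy_var_y [simp]: "subst_xy U V var_y = V"
  by (simp_all add: subst_xy_def subst_x_def map_poly_1 const2_def var_x_def var_y_def
    map_poly_pCons
      one_pCons[symmetric])

lemma subst_xy_power: "subst_xy U V (f ^ n) = subst_xy U V f ^ n"
  by (induct n) (simp_all add: subst_xy_mult)

lemma subst_xy_diff: "subst_xy U V (f - g) = subst_xy U V f - subst_xy U V g"
  by (metis add_diff_cancel diff_add_cancel subst_xy_add)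

lemma k_linear_subst_xy: "k_linear (subst_xy U V)"
  by (simp add: k_linear_def subst_xy_add subst_xy_mult)

lemma subst_xy_monom2: "subst_xy U V (monom2 c i j) = const2 c * U ^ i * V ^ j"
  by (simp add: monom2_def subst_xy_mult subst_xy_power)

lemma subst_xy_monomial: "subst_xy U V (var_x ^ i * var_y ^ j) = U ^ i * V ^ j"
  by (simp add: subst_xy_mult subst_xy_power)

definition alg_hom :: "('a::comm_ring_1 bipoly \<Rightarrow> 'a bipoly) \<Rightarrow> bool" where
  "alg_hom \<phi> \<longleftrightarrow> (\<forall>f g. \<phi> (f + g) = \<phi> f + \<phi> g) \<and> (\<forall>f g. \<phi> (f * g) = \<phi> f * \<phi> g) \<and>
     (\<forall>c. \<phi> (const2 c) = const2 c)"

lemma alg_hom_subst_xy: "alg_hom (subst_xy U V)"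
  by (simp add: alg_hom_def subst_xy_add subst_xy_mult)

lemma alg_hom_eqI:
  assumes "alg_hom \<phi>" "alg_hom \<psi>" "\<phi> var_x = \<psi> var_x" "\<phi> var_y = \<psi> var_y"
  shows "\<phi> f = \<psi> f"
  by (induct f rule: bipoly_induct) (use assms in \<open>simp_all add: alg_hom_def\<close>)

context
  fixes \<phi> :: "'a::field bipoly \<Rightarrow> 'a bipoly"
  assumes hom: "alg_hom \<phi>"
begin

lemma alg_hom_add: "\<phi> (f + g) = \<phi> f + \<phi> g"
  and alg_hom_mult: "\<phi> (f * g) = \<phi> f * \<phi> g"
  and alg_hom_const2: "\<phi> (const2 c) = const2 c"
  using hom by (simp_all add: alg_hom_def)

lemma alg_hom_0: "\<phi> 0 = 0"
  and alg_hom_1: "\<phi> 1 = 1"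
  using alg_hom_const2[of 0] alg_hom_const2[of 1] by simp_all

lemma alg_hom_dvd: "a dvd b \<Longrightarrow> \<phi> a dvd \<phi> b"
  by (elim dvdE) (simp add: alg_hom_mult)

lemma alg_hom_is_unit: "is_unit u \<Longrightarrow> is_unit (\<phi> u)"
  using alg_hom_dvd alg_hom_1 by metis

end

lemma alg_hom_comp: "alg_hom \<phi> \<Longrightarrow> alg_hom \<psi> \<Longrightarrow> alg_hom (\<phi> \<circ> \<psi>)"
  by (simp add: alg_hom_def)

lemma alg_hom_id: "alg_hom id"
  by (simp add: alg_hom_def)

definition alg_auto :: "('a::comm_ring_1 bipoly \<Rightarrow> 'a bipoly) \<Rightarrow> ('a bipoly \<Rightarrow> 'a bipoly) \<Rightarrow> bool" where
  "alg_auto \<phi> \<psi> \<longleftrightarrow> alg_hom \<phi> \<and> alg_hom \<psi> \<and> (\<forall>f. \<phi> (\<psi> f) = f) \<and> (\<forall>f. \<psi> (\<phi> f) = f)"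

lemma alg_auto_sym: "alg_auto \<phi> \<psi> \<Longrightarrow> alg_auto \<psi> \<phi>"
  by (auto simp: alg_auto_def)

lemma alg_auto_subst_xy:
  assumes "subst_xy U V X = var_x" "subst_xy U V Y = var_y"
    and "subst_xy X Y U = var_x" "subst_xy X Y V = var_y"
  shows "alg_auto (subst_xy U V) (subst_xy X Y)"
proof -
  have "(subst_xy U V \<circ> subst_xy X Y) f = id f" "(subst_xy X Y \<circ> subst_xy U V) f = id f" for f
    by (rule alg_hom_eqI[OF alg_hom_comp[OF alg_hom_subst_xy alg_hom_subst_xy] alg_hom_id];
        use assms in simp)+
  then show ?thesis
    by (simp add: alg_auto_def alg_hom_subst_xy)
qed

definition conj_der :: "('a::field_char_0 bipoly \<Rightarrow> 'a bipoly) \<Rightarrow> ('a bipoly \<Rightarrow> 'a bipoly) \<Rightarrow>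
    ('a bipoly \<Rightarrow> 'a bipoly) \<Rightarrow> 'a bipoly \<Rightarrow> 'a bipoly" where
  "conj_der \<phi> \<psi> E = \<phi> \<circ> E \<circ> \<psi>"

context
  fixes \<phi> \<psi> :: "'a::field_char_0 bipoly \<Rightarrow> 'a bipoly"
  assumes auto: "alg_auto \<phi> \<psi>"
begin

lemma alg_auto_homs: "alg_hom \<phi>" "alg_hom \<psi>"
  and alg_auto_inverse [simp]: "\<phi> (\<psi> f) = f" "\<psi> (\<phi> f) = f"
  using auto by (simp_all add: alg_auto_def)

lemma conj_der_apply: "conj_der \<phi> \<psi> E f = \<phi> (E (\<psi> f))"
  by (simp add: conj_der_def)

lemma derivation_conj_der:
  assumes "is_derivation E"
  shows "is_derivation (conj_der \<phi> \<psi> E)"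
  unfolding is_derivation_def conj_der_apply
proof (intro conjI allI)
  note hom = alg_auto_homs
  fix f g c
  show "\<phi> (E (\<psi> (f + g))) = \<phi> (E (\<psi> f)) + \<phi> (E (\<psi> g))"
    by (simp add: alg_hom_add[OF hom(2)] der_add[OF assms] alg_hom_add[OF hom(1)])
  show "\<phi> (E (\<psi> (f * g))) = f * \<phi> (E (\<psi> g)) + g * \<phi> (E (\<psi> f))"
    by (simp add: alg_hom_mult[OF hom(2)] der_mult[OF assms] alg_hom_add[OF hom(1)]
      alg_hom_mult[OF hom(1)])
  show "\<phi> (E (\<psi> (const2 c * f))) = const2 c * \<phi> (E (\<psi> f))"
    by (simp add: alg_hom_mult[OF hom(2)] alg_hom_const2[OF hom(2)] der_const2_mult[OF assms]
        alg_hom_mult[OF hom(1)] alg_hom_const2[OF hom(1)])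
qed

lemma conj_der_iter: "(conj_der \<phi> \<psi> E ^^ n) f = \<phi> ((E ^^ n) (\<psi> f))"
  by (induct n) (simp_all add: funpow_Suc_outer conj_der_apply)

lemma is_LND_conj_der: "is_LND E \<Longrightarrow> is_LND (conj_der \<phi> \<psi> E)"
  unfolding is_LND_def using derivation_conj_der conj_der_iter alg_hom_0[OF alg_auto_homs(1)]
  by metis

lemma irreducible_der_conj_der:
  assumes "irreducible_der E"
  shows "irreducible_der (conj_der \<phi> \<psi> E)"
  unfolding irreducible_der_def
proof
  assume "\<exists>h. \<not> is_unit h \<and> (\<forall>f. h dvd conj_der \<phi> \<psi> E f)"
  then obtain h where nonunit: "\<not> is_unit h" and dvd: "\<And>f. h dvd \<phi> (E (\<psi> f))"
    by (auto simp: conj_der_apply)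
  have "\<psi> h dvd E f" for f
    using alg_hom_dvd[OF alg_auto_homs(2) dvd[of "\<phi> f"]] by simp
  moreover have "\<not> is_unit (\<psi> h)"
    using alg_hom_is_unit[OF alg_auto_homs(1), of "\<psi> h"] nonunit by auto
  ultimately show False
    using assms unfolding irreducible_der_def by blast
qed

lemma lnd_deg_conj_der: "lnd_deg (conj_der \<phi> \<psi> E) f = lnd_deg E (\<psi> f)"
proof -
  have "(conj_der \<phi> \<psi> E ^^ Suc m) f = 0 \<longleftrightarrow> (E ^^ Suc m) (\<psi> f) = 0" for m
    unfolding conj_der_iter
    by (metis alg_auto_inverse(2) alg_hom_0[OF alg_auto_homs(1)] alg_hom_0[OF alg_auto_homs(2)])
  then show ?thesis
    unfolding lnd_deg_def by simp
qed

lemma conj_der_commute: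
  assumes "E1 \<circ> E2 = E2 \<circ> E1"
  shows "conj_der \<phi> \<psi> E1 \<circ> conj_der \<phi> \<psi> E2 = conj_der \<phi> \<psi> E2 \<circ> conj_der \<phi> \<psi> E1"
proof
  fix f
  have "E1 (E2 (\<psi> f)) = E2 (E1 (\<psi> f))"
    using assms by (metis comp_apply)
  then show "(conj_der \<phi> \<psi> E1 \<circ> conj_der \<phi> \<psi> E2) f = (conj_der \<phi> \<psi> E2 \<circ> conj_der \<phi> \<psi> E1) f"
    by (simp add: conj_der_apply)
qed

lemma conj_der_cancel: "conj_der \<psi> \<phi> (conj_der \<phi> \<psi> E) = E"
  by (simp add: conj_der_def fun_eq_iff)

end

definition swap_xy :: "'a::field_char_0 bipoly \<Rightarrow> 'a bipoly" where
  "swap_xy = subst_xy var_y var_x"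

lemma alg_auto_swap_xy: "alg_auto swap_xy swap_xy"
  unfolding swap_xy_def by (rule alg_auto_subst_xy) simp_all

lemma conj_der_swap_xy_dx: "conj_der swap_xy swap_xy dx = dy"
  by (rule derivation_eqI[OF derivation_conj_der[OF alg_auto_swap_xy]])
    (unfold conj_der_apply[OF alg_auto_swap_xy], simp_all add: derivation_dx derivation_dy
      swap_xy_def)

lemma conj_der_swap_xy_dy: "conj_der swap_xy swap_xy dy = dx"
  by (rule derivation_eqI[OF derivation_conj_der[OF alg_auto_swap_xy]])
    (unfold conj_der_apply[OF alg_auto_swap_xy], simp_all add: derivation_dx derivation_dy
      swap_xy_def)

lemma swap_xy_monom2: "swap_xy (monom2 c i j) = monom2 c j i"
  unfolding swap_xy_def subst_xy_monom2 by (simp add: monom2_def ac_simps)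

lemma coeff2_swap_xy: "coeff2 (swap_xy f) i j = coeff2 f j i"
proof -
  have "k_linear swap_xy"
    unfolding swap_xy_def by (rule k_linear_subst_xy)
  have "swap_xy f = swap_xy (\<Sum>(i', j')\<in>support2 f. monom2 (coeff2 f i' j') i' j')"
    by (rule arg_cong[OF monom2_expansion])
  also have "\<dots> = (\<Sum>(i', j')\<in>support2 f. monom2 (coeff2 f i' j') j' i')"
    by (simp add: k_linear_sum[OF \<open>k_linear swap_xy\<close>] case_prod_unfold swap_xy_monom2)
  finally have "coeff2 (swap_xy f) i j = (\<Sum>x\<in>support2 f. if x = (j, i) then coeff2 f j i else 0)"
    by (auto simp: coeff2_sum coeff2_monom2 case_prod_unfold prod_eq_iff intro!: sum.cong)
  also have "\<dots> = coeff2 f j i"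
    using finite_support2[of f] by (simp add: sum.delta support2_def)
  finally show ?thesis .
qed

lemma swap_xy_swap_xy [simp]: "swap_xy (swap_xy f) = f"
  by (fact alg_auto_inverse(1)[OF alg_auto_swap_xy])

lemma swap_xy_eq_0_iff [simp]: "swap_xy f = 0 \<longleftrightarrow> f = 0"
  by (metis swap_xy_swap_xy swap_xy_def subst_xy_0)

lemma wdeg_le_swap_xy: "wdeg_le p q M (swap_xy f) \<longleftrightarrow> wdeg_le q p M f"
  by (auto simp: wdeg_le_def coeff2_swap_xy wdeg_def add.commute)

lemma wcomp_swap_xy: "wcomp p q M (swap_xy f) = swap_xy (wcomp q p M f)"
  by (rule coeff2_eqI) (simp add: coeff2_wcomp coeff2_swap_xy wdeg_def add.commute)

lemma whomog_swap_xy: "whomog p q M (swap_xy f) \<longleftrightarrow> whomog q p M f"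
  by (metis whomog_def wcomp_swap_xy swap_xy_swap_xy)

definition triang :: "'a::field_char_0 \<Rightarrow> nat \<Rightarrow> 'a bipoly \<Rightarrow> 'a bipoly" where
  "triang c k = subst_xy (var_x - const2 c * var_y ^ k) var_y"

definition triang_inv :: "'a::field_char_0 \<Rightarrow> nat \<Rightarrow> 'a bipoly \<Rightarrow> 'a bipoly" where
  "triang_inv c k = subst_xy (var_x + const2 c * var_y ^ k) var_y"

lemma alg_auto_triang: "alg_auto (triang c k) (triang_inv c k)"
  unfolding triang_def triang_inv_def
  by (rule alg_auto_subst_xy)
    (simp_all add: subst_xy_add subst_xy_diff subst_xy_mult subst_xy_power)

lemma dx_var_y_power [simp]: "dx (var_y ^ k) = (0::'a::field_char_0 bipoly)"
  by (induct k) (simp_all add: der_mult[OF derivation_dx] der_1[OF derivation_dx])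

lemma conj_der_triang_dx: "conj_der (triang c k) (triang_inv c k) dx = dx"
proof (rule derivation_eqI[OF derivation_conj_der[OF alg_auto_triang derivation_dx] derivation_dx])
  show "conj_der (triang c k) (triang_inv c k) dx var_x = dx var_x"
    unfolding conj_der_apply[OF alg_auto_triang]
    by (simp add: conj_der_apply[OF alg_auto_triang] triang_def triang_inv_def
        der_add[OF derivation_dx]
        der_const2_mult[OF derivation_dx])
qed (unfold conj_der_apply[OF alg_auto_triang], simp add: triang_def triang_inv_def)

lemma conj_der_triang_dy:
  assumes "1 \<le> k"
  shows "conj_der (triang c k) (triang_inv c k) dy
    = der_xy (const2 (c * of_nat k) * var_y ^ (k - 1)) 1"
proof (rule derivation_eqI[OF derivation_conj_der[OF alg_auto_triang derivation_dy]
      derivation_der_xy])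
  obtain k' where k: "k = Suc k'"
    using assms by (cases k) auto
  have "dy (var_y ^ k) = of_nat k * (var_y ^ (k - 1) :: 'a bipoly)"
    using der_power[OF derivation_dy, of var_y k'] by (simp add: k del: of_nat_Suc)
  then have
      "dy (var_x + const2 c * var_y ^ k) = const2 (c * of_nat k) * (var_y ^ (k - 1) :: 'a bipoly)"
    by (simp add: der_add[OF derivation_dy] der_const2_mult[OF derivation_dy] const2_mult
      const2_of_nat
        mult.assoc)
  then show "conj_der (triang c k) (triang_inv c k) dy var_x
      = der_xy (const2 (c * of_nat k) * var_y ^ (k - 1)) 1 var_x"
    unfolding conj_der_apply[OF alg_auto_triang]
    by (simp add: triang_def triang_inv_def subst_xy_mult subst_xy_power)
qed (unfold conj_der_apply[OF alg_auto_triang], simp add: triang_def triang_inv_def)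


lemma var_y_dvd_iff: "var_y dvd (f :: 'a::field bipoly) \<longleftrightarrow> coeff f 0 = 0"
proof
  assume "var_y dvd f"
  then show "coeff f 0 = 0"
    by (auto simp: var_y_def coeff_pCons elim!: dvdE)
next
  assume "coeff f 0 = 0"
  obtain c g where "f = pCons c g"
    by (cases f)
  then have "f = var_y * g"
    using \<open>coeff f 0 = 0\<close> by (simp add: var_y_def)
  then show "var_y dvd f"
    by simp
qed

definition eval_x0 :: "'a::comm_ring_1 bipoly \<Rightarrow> 'a poly" where
  "eval_x0 f = map_poly (\<lambda>c. poly c 0) f"

lemma var_x_dvd_iff: "var_x dvd (f :: 'a::field bipoly) \<longleftrightarrow> eval_x0 f = 0"
proof
  assume "var_x dvd f"
  then show "eval_x0 f = 0"
    by (auto simp: var_x_def eval_x0_def poly_eq_iff coeff_map_poly elim!: dvdE)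
next
  assume "eval_x0 f = 0"
  then have "poly (coeff f j) 0 = 0" for j
    by (metis coeff_0 coeff_map_poly eval_x0_def poly_0)
  then have dvd: "[:0, 1:] dvd coeff f j" for j
    using dvd_iff_poly_eq_0[of 0 "coeff f j"] by simp
  have "f = smult [:0, 1:] (map_poly (\<lambda>c. c div [:0, 1:]) f)"
    by (rule poly_eqI) (use dvd_mult_div_cancel[OF dvd] in \<open>simp add: coeff_map_poly\<close>)
  then have "f = var_x * map_poly (\<lambda>c. c div [:0, 1:]) f"
    by (simp add: var_x_def)
  then show "var_x dvd f"
    by (metis dvdI)
qed

lemma var_y_dvd_multD: "var_y dvd (f * g :: 'a::field bipoly) \<Longrightarrow> var_y dvd f \<or> var_y dvd g"
  by (simp add: var_y_dvd_iff coeff_mult_0)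

lemma var_x_dvd_multD: "var_x dvd (f * g :: 'a::field bipoly) \<Longrightarrow> var_x dvd f \<or> var_x dvd g"
  by (simp add: var_x_dvd_iff eval_x0_def map_poly_mult_hom)

lemma var_y_dvd_iff_coeff2: "var_y dvd (f :: 'a::field bipoly) \<longleftrightarrow> (\<forall>i. coeff2 f i 0 = 0)"
  by (simp add: var_y_dvd_iff coeff2_def poly_eq_iff)

lemma var_x_dvd_iff_coeff2: "var_x dvd (f :: 'a::field bipoly) \<longleftrightarrow> (\<forall>j. coeff2 f 0 j = 0)"
  by (simp add: var_x_dvd_iff eval_x0_def coeff2_def poly_eq_iff coeff_map_poly poly_0_coeff_0)


definition eval2 :: "'a::comm_ring_1 bipoly \<Rightarrow> 'a \<Rightarrow> 'a \<Rightarrow> 'a" where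
  "eval2 f a b = poly (map_poly (\<lambda>c. poly c a) f) b"

lemma eval2_add: "eval2 (f + g) a b = eval2 f a b + eval2 g a b"
  and eval2_mult: "eval2 (f * g) a b = eval2 f a b * eval2 g a b"
  by (simp_all add: eval2_def map_poly_add_hom map_poly_mult_hom)

lemma eval2_0 [simp]: "eval2 0 a b = 0"
  by (simp add: eval2_def)

lemma eval2_1 [simp]: "eval2 1 a b = 1"
  by (simp add: eval2_def)

lemma eval2_const2 [simp]: "eval2 (const2 c) a b = c"
  by (simp add: eval2_def const2_def map_poly_pCons)

lemma eval2_power: "eval2 (f ^ n) a b = eval2 f a b ^ n"
  by (induct n) (simp_all add: eval2_mult)

lemma eval2_diff: "eval2 (f - g) a b = eval2 f a b - eval2 g a b"
  by (metis add_diff_cancel diff_add_cancel eval2_add)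

lemma eval2_sum: "eval2 (sum g A) a b = (\<Sum>x\<in>A. eval2 (g x) a b)"
  and eval2_prod: "eval2 (prod g A) a b = (\<Prod>x\<in>A. eval2 (g x) a b)"
  by (induct A rule: infinite_finite_induct) (simp_all add: eval2_add eval2_mult)

lemma eval2_eq_0_imp_eq_0:
  fixes f :: "'a::{field, ring_char_0} bipoly"
  assumes "\<And>a b. eval2 f a b = 0"
  shows "f = 0"
proof -
  have "map_poly (\<lambda>c. poly c a) f = 0" for a
    by (subst poly_all_0_iff_0[symmetric]) (use assms[unfolded eval2_def] in auto)
  then have "poly (coeff f j) a = 0" for a j
    by (metis coeff_0 coeff_map_poly poly_0)
  then show ?thesis
    by (metis poly_all_0_iff_0 poly_eqI coeff_0)
qed

lemma poly_eval2_ratio_eq_0: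
  fixes p q :: "'a::field bipoly"
  assumes "(\<Sum>i\<le>I. const2 (c i) * p ^ i * q ^ (I - i)) = 0" "eval2 q a b \<noteq> 0"
  shows "poly (\<Sum>i\<le>I. monom (c i) i) (eval2 p a b / eval2 q a b) = 0"
proof -
  let ?t = "eval2 p a b / eval2 q a b"
  have "0 = (\<Sum>i\<le>I. c i * eval2 p a b ^ i * eval2 q a b ^ (I - i))"
    using arg_cong[OF assms(1), of "\<lambda>f. eval2 f a b"]
    by (simp add: eval2_sum eval2_mult eval2_power)
  also have "\<dots> = (\<Sum>i\<le>I. eval2 q a b ^ I * (c i * ?t ^ i))"
    using assms(2) by (intro sum.cong) (simp_all add: power_divide field_simps flip: power_add)
  also have "\<dots> = eval2 q a b ^ I * poly (\<Sum>i\<le>I. monom (c i) i) ?t"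
    by (simp add: poly_sum poly_monom sum_distrib_left)
  finally show ?thesis
    using assms(2) by simp
qed

text \<open>At every point where \<open>q\<close> does not vanish, \<open>p/q\<close> is one of the finitely many roots of
  the relation; so \<open>q\<close> times the product of all \<open>p - r q\<close> vanishes everywhere, and the field
  is infinite.\<close>
lemma proportional_if_homogeneous_relation:
  fixes p q :: "'a::field_char_0 bipoly" and c :: "nat \<Rightarrow> 'a"
  assumes "q \<noteq> 0" and relation: "(\<Sum>i\<le>I. const2 (c i) * p ^ i * q ^ (I - i)) = 0"
    and "\<exists>i\<le>I. c i \<noteq> 0"
  shows "\<exists>r. p = const2 r * q"
proof -
  define \<phi> where "\<phi> = (\<Sum>i\<le>I. monom (c i) i)"
  have "\<phi> \<noteq> 0"
    using assms(3) by (auto simp: \<phi>_def poly_eq_iff coeff_sum)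
  define R where "R = {t. poly \<phi> t = 0}"
  have "finite R"
    unfolding R_def using poly_roots_finite[OF \<open>\<phi> \<noteq> 0\<close>] .
  define G where "G = q * (\<Prod>r\<in>R. p - const2 r * q)"
  have "eval2 G a b = 0" for a b
  proof (cases "eval2 q a b = 0")
    case True
    then show ?thesis
      by (simp add: G_def eval2_mult)
  next
    case False
    then have "eval2 p a b / eval2 q a b \<in> R"
      using poly_eval2_ratio_eq_0[OF relation] by (simp add: R_def \<phi>_def)
    moreover have "eval2 (p - const2 (eval2 p a b / eval2 q a b) * q) a b = 0"
      using False by (simp add: eval2_diff eval2_mult)
    ultimately show ?thesis
      using \<open>finite R\<close> by (auto simp: G_def eval2_mult eval2_prod prod_zero_iff)
  qed
  then have "G = 0"
    by (rule eval2_eq_0_imp_eq_0)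
  then show ?thesis
    using \<open>q \<noteq> 0\<close> \<open>finite R\<close> by (auto simp: G_def prod_zero_iff)
qed

lemma whomog_weight_1_expansion:
  assumes "1 \<le> k" "whomog k 1 (int N) F"
  shows "F = (\<Sum>i\<le>N div k. monom2 (coeff2 F i (N - k * i)) i (N - k * i))"
proof (rule coeff2_eqI)
  fix i' j'
  have support: "i' \<le> N div k \<and> j' = N - k * i'" if "coeff2 F i' j' \<noteq> 0"
  proof -
    have "k * i' + j' = N"
      using whomogD[OF assms(2) that] by (simp only: of_nat_eq_iff mult_1)
    then show ?thesis
      using assms(1) by (auto simp: less_eq_div_iff_mult_less_eq mult.commute)
  qed
  have "coeff2 (\<Sum>i\<le>N div k. monom2 (coeff2 F i (N - k * i)) i (N - k * i)) i' j'
      = (\<Sum>i\<le>N div k.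
          if i = i' then (if j' = N - k * i' then coeff2 F i' (N - k * i') else 0) else 0)"
    unfolding coeff2_sum by (rule sum.cong) (auto simp: coeff2_monom2)
  also have "\<dots> = coeff2 F i' j'"
    using support by auto
  finally show
      "coeff2 F i' j' = coeff2 (\<Sum>i\<le>N div k. monom2 (coeff2 F i (N - k * i)) i (N - k * i)) i' j'"
    by simp
qed

text \<open>A relation \<open>F(\<alpha>, \<beta>) = 0\<close> with \<open>F\<close> homogeneous for the weights \<open>(k, 1)\<close> is, after
  dividing by a power of \<open>\<beta>\<close>, a homogeneous relation between \<open>\<alpha>\<close> and \<open>\<beta>\<^sup>k\<close>.\<close>
lemma power_proportional_if_whomog_relation:
  fixes F \<alpha> \<beta> :: "'a::field_char_0 bipoly"
  assumes "1 \<le> k" "F \<noteq> 0" "whomog k 1 (int N) F" "subst_xy \<alpha> \<beta> F = 0" "\<beta> \<noteq> 0"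
  shows "\<exists>r. \<alpha> = const2 r * \<beta> ^ k"
proof -
  define I where "I = N div k"
  define c where "c i = coeff2 F i (N - k * i)" for i
  note F = whomog_weight_1_expansion[OF assms(1,3), folded I_def c_def]
  have "\<exists>i\<le>I. c i \<noteq> 0"
  proof (rule ccontr)
    assume "\<not> (\<exists>i\<le>I. c i \<noteq> 0)"
    then have "F = 0"
      by (subst F) (simp add: monom2_def)
    then show False
      using \<open>F \<noteq> 0\<close> by simp
  qed
  have "0 = (\<Sum>i\<le>I. const2 (c i) * \<alpha> ^ i * \<beta> ^ (N - k * i))"
    using assms(4) by (subst (asm) F) (simp add: k_linear_sum[OF k_linear_subst_xy] subst_xy_monom2)
  also have "\<dots> = \<beta> ^ (N mod k) * (\<Sum>i\<le>I. const2 (c i) * \<alpha> ^ i * (\<beta> ^ k) ^ (I - i))"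
    unfolding sum_distrib_left
  proof (rule sum.cong)
    fix i
    assume "i \<in> {..I}"
    then have "N - k * i = N mod k + k * (I - i)"
      by (simp add: I_def diff_mult_distrib2)
    then show "const2 (c i) * \<alpha> ^ i * \<beta> ^ (N - k * i)
        = \<beta> ^ (N mod k) * (const2 (c i) * \<alpha> ^ i * (\<beta> ^ k) ^ (I - i))"
      by (simp add: power_add power_mult ac_simps)
  qed simp
  finally have "(\<Sum>i\<le>I. const2 (c i) * \<alpha> ^ i * (\<beta> ^ k) ^ (I - i)) = 0"
    using \<open>\<beta> \<noteq> 0\<close> by simp
  then show ?thesis
    using proportional_if_homogeneous_relation[where p = \<alpha> and q = "\<beta> ^ k" and I = I and c = c]
      \<open>\<exists>i\<le>I. c i \<noteq> 0\<close> \<open>\<beta> \<noteq> 0\<close>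
    by simp
qed


section \<open>Leading forms of divided powers\<close>

definition wdegree :: "nat \<Rightarrow> nat \<Rightarrow> 'a::zero bipoly \<Rightarrow> int" where
  "wdegree p q f = Max ((\<lambda>(i, j). wdeg p q i j) ` support2 f)"

lemma wdeg_le_wdegree: "wdeg_le p q (wdegree p q f) f"
  unfolding wdeg_le_def wdegree_def using finite_support2[of f]
  by (auto intro!: Max_ge simp: support2_def)

lemma wcomp_wdegree_neq_0:
  assumes "f \<noteq> 0"
  shows "wcomp p q (wdegree p q f) f \<noteq> 0"
proof -
  have "support2 f \<noteq> {}"
    using assms coeff2_eqI[of f 0] by (auto simp: support2_def)
  then obtain i j where "(i, j) \<in> support2 f" "wdegree p q f = wdeg p q i j"
    unfolding wdegree_def
    using finite_support2[of f] Max_in[of "(\<lambda>(i, j). wdeg p q i j) ` support2 f"]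
    by fastforce
  then have "coeff2 (wcomp p q (wdegree p q f) f) i j \<noteq> 0"
    by (simp add: coeff2_wcomp support2_def)
  then show ?thesis
    by auto
qed

lemma exists_wdeg_top:
  fixes P Q :: "'a::field_char_0 bipoly"
  assumes "P \<noteq> 0 \<or> Q \<noteq> 0"
  shows "\<exists>e. wdeg_le p q (int p + e) P \<and> wdeg_le p q (int q + e) Q \<and>
    (wcomp p q (int p + e) P \<noteq> 0 \<or> wcomp p q (int q + e) Q \<noteq> 0)"
proof -
  define e where "e = (if P = 0 then wdegree p q Q - int q
    else if Q = 0 then wdegree p q P - int p
    else max (wdegree p q P - int p) (wdegree p q Q - int q))"
  have "wdeg_le p q (int p + e) P" "wdeg_le p q (int q + e) Q"
    using wdeg_le_mono[OF wdeg_le_wdegree] by (auto simp: e_def)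
  moreover have "wcomp p q (int p + e) P \<noteq> 0 \<or> wcomp p q (int q + e) Q \<noteq> 0"
    using assms wcomp_wdegree_neq_0[of P p q] wcomp_wdegree_neq_0[of Q p q]
    by (auto simp: e_def max_def)
  ultimately show ?thesis
    by blast
qed

locale lnd_weight_bound =
  fixes D :: "'a::field_char_0 bipoly \<Rightarrow> 'a bipoly" and g p q :: nat
  assumes lnd: "is_LND D" and g_pos: "1 \<le> g"
    and kills_var_x: "(D ^^ Suc (g * p)) var_x = 0"
    and kills_var_y: "(D ^^ Suc (g * q)) var_y = 0"
begin

lemma divided_power_monomial:
  "(D ^^ Suc (g * (p * i + q * j))) (var_x ^ i * var_y ^ j) = 0 \<and>
   divided_power D (g * (p * i + q * j)) (var_x ^ i * var_y ^ j)
     = divided_power D (g * p) var_x ^ i * divided_power D (g * q) var_y ^ j"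
proof -
  note der = is_LND_derivation[OF lnd]
  have "g * (p * i + q * j) = i * (g * p) + j * (g * q)"
    by (simp add: algebra_simps)
  then show ?thesis
    using divided_power_mult[OF der] divided_power_power[OF der kills_var_x, of i]
      divided_power_power[OF der kills_var_y, of j]
    by metis
qed

lemma der_iter_vanishes_if_wdeg_le:
  assumes "wdeg_le p q (int N) F"
  shows "(D ^^ Suc (g * N)) F = 0"
proof -
  have "(D ^^ Suc (g * N)) F = (\<lambda>_. 0) F"
  proof (rule k_linear_eq_on_monomials[OF k_linear_der_iter[OF is_LND_derivation[OF lnd]]
        k_linear_zero])
    fix i j
    assume "coeff2 F i j \<noteq> 0"
    then have "p * i + q * j \<le> N"
      using wdeg_leD[OF assms] by (simp add: wdeg_le_nat_iff)
    then have "Suc (g * (p * i + q * j)) \<le> Suc (g * N)"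
      by simp
    then show "(D ^^ Suc (g * N)) (var_x ^ i * var_y ^ j) = 0"
      using der_iter_vanishes_mono[OF is_LND_derivation[OF lnd]] divided_power_monomial[of i j]
      by blast
  qed
  then show ?thesis
    by simp
qed

text \<open>Every monomial of weight \<open>w\<close> is killed by \<open>D\<^sup>g\<^sup>w\<^sup>+\<^sup>1\<close>, and its divided power at
  \<open>g w\<close> is obtained by substituting the top divided powers of \<open>x\<close> and \<open>y\<close>.\<close>
lemma divided_power_leading_form:
  assumes "wdeg_le p q (int N) F"
  shows "divided_power D (g * N) F
    = subst_xy (divided_power D (g * p) var_x) (divided_power D (g * q) var_y)
      (wcomp p q (int N) F)"
proof -
  let ?T =
    "subst_xy (divided_power D (g * p) var_x) (divided_power D (g * q) var_y) \<circ> wcomp p q (int N)"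
  have "divided_power D (g * N) F = ?T F"
  proof (rule k_linear_eq_on_monomials[OF k_linear_divided_power[OF is_LND_derivation[OF lnd]]
        k_linear_comp[OF k_linear_subst_xy k_linear_wcomp]])
    fix i j
    assume "coeff2 F i j \<noteq> 0"
    then have le: "p * i + q * j \<le> N"
      using wdeg_leD[OF assms] by (simp add: wdeg_le_nat_iff)
    have hom: "whomog p q (wdeg p q i j) (var_x ^ i * var_y ^ j :: 'a bipoly)"
      by (rule whomog_monomial)
    show "divided_power D (g * N) (var_x ^ i * var_y ^ j) = ?T (var_x ^ i * var_y ^ j)"
    proof (cases "p * i + q * j = N")
      case True
      then show ?thesis
        using hom divided_power_monomial[of i j]
        by (simp add: whomog_def wdeg_def subst_xy_monomial)
    next
      case False
      then have "wcomp p q (int N) (var_x ^ i * var_y ^ j :: 'a bipoly) = 0"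
        by (intro wcomp_whomog_other[OF hom]) (simp add: wdeg_eq_nat_iff)
      moreover have "g * (p * i + q * j) + g \<le> g * N"
        using False le mult_le_mono2[of "p * i + q * j + 1" N g] by simp
      then have "Suc (g * (p * i + q * j)) \<le> g * N"
        using g_pos by linarith
      then have "(D ^^ (g * N)) (var_x ^ i * var_y ^ j :: 'a bipoly) = 0"
        using der_iter_vanishes_mono[OF is_LND_derivation[OF lnd]] divided_power_monomial[of i j]
        by blast
      ultimately show ?thesis
        by (simp add: divided_power_eq_0_iff[OF is_LND_derivation[OF lnd]])
    qed
  qed
  then show ?thesis
    by simp
qed

lemma divided_power_var_x_neq_0: "divided_power D (lnd_deg D var_x) var_x \<noteq> 0"
  and divided_power_var_y_neq_0: "divided_power D (lnd_deg D var_y) var_y \<noteq> 0"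
  using der_iter_lnd_deg_neq_0[OF lnd]
  by (simp_all add: divided_power_eq_0_iff[OF is_LND_derivation[OF lnd]])

lemma lnd_deg_of_monomial_top:
  assumes "wdeg_le p q (int N) F" "wcomp p q (int N) F = monom2 c i j" "c \<noteq> 0"
    and "divided_power D (g * p) var_x \<noteq> 0" "divided_power D (g * q) var_y \<noteq> 0"
  shows "lnd_deg D F = g * N"
    and "divided_power D (g * N) F = const2 c * divided_power D (g * p) var_x ^ i
      * divided_power D (g * q) var_y ^ j"
proof -
  show top: "divided_power D (g * N) F
      = const2 c * divided_power D (g * p) var_x ^ i * divided_power D (g * q) var_y ^ j"
    using divided_power_leading_form[OF assms(1)] by (simp add: assms(2) subst_xy_monom2)
  then have "(D ^^ (g * N)) F \<noteq> 0"
    using assms(3-5) by (simp flip: divided_power_eq_0_iff[OF is_LND_derivation[OF lnd]])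
  then show "lnd_deg D F = g * N"
    using lnd_deg_le[OF lnd der_iter_vanishes_if_wdeg_le[OF assms(1)]] der_iter_eq_0_iff[OF lnd]
    by (metis le_antisym not_less)
qed

end


definition x_free :: "'a::zero bipoly \<Rightarrow> bool" where
  "x_free F \<longleftrightarrow> (\<forall>i j. coeff2 F i j \<noteq> 0 \<longrightarrow> i = 0)"

lemma x_free_top_monomial:
  fixes F :: "'a::field bipoly"
  assumes "F \<noteq> 0" "x_free F" "1 \<le> q"
  shows "\<exists>c m. c \<noteq> 0 \<and> wdeg_le p q (int (q * m)) F \<and> wcomp p q (int (q * m)) F = monom2 c 0 m"
proof (intro exI conjI)
  let ?m = "degree F"
  show "coeff2 F 0 ?m \<noteq> 0"
  proof
    assume "coeff2 F 0 ?m = 0"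
    then have "coeff F ?m = 0"
      using assms(2) by (intro poly_eqI) (auto simp: x_free_def coeff2_def)
    then show False
      using assms(1) by simp
  qed
  show "wdeg_le p q (int (q * ?m)) F"
  proof (rule wdeg_leI)
    fix i j
    assume "coeff2 F i j \<noteq> 0"
    then have "i = 0" "j \<le> ?m"
      using assms(2) coeff2_nonzero_bound(2) by (auto simp: x_free_def)
    then show "wdeg p q i j \<le> int (q * ?m)"
      unfolding wdeg_le_nat_iff by simp
  qed
  show "wcomp p q (int (q * ?m)) F = monom2 (coeff2 F 0 ?m) 0 ?m"
    using assms(2,3)
    by (intro coeff2_eqI) (auto simp: x_free_def coeff2_wcomp coeff2_monom2 wdeg_def)
qed

lemma x_free_swap_xy_top_monomial:
  fixes F :: "'a::field_char_0 bipoly"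
  assumes "F \<noteq> 0" "x_free (swap_xy F)" "1 \<le> p"
  shows "\<exists>c n. c \<noteq> 0 \<and> wdeg_le p q (int (p * n)) F \<and> wcomp p q (int (p * n)) F = monom2 c n 0"
proof -
  obtain c n where "c \<noteq> 0" and "wdeg_le q p (int (p * n)) (swap_xy F)"
    and top: "wcomp q p (int (p * n)) (swap_xy F) = monom2 c 0 n"
    using x_free_top_monomial[of "swap_xy F" p q] assms by auto
  moreover have "wcomp p q (int (p * n)) F = monom2 c n 0"
    using wcomp_swap_xy[of p q "int (p * n)" "swap_xy F"] top by (simp add: swap_xy_monom2)
  ultimately show ?thesis
    using wdeg_le_swap_xy[of q p] by blast
qed

lemma x_free_if_wdeg_le_below:
  assumes "wdeg_le p q (int p + e) F" "e < 0"
  shows "x_free F"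
  unfolding x_free_def
proof (intro allI impI)
  fix i j
  assume "coeff2 F i j \<noteq> 0"
  then have "int (p * i + q * j) < int p"
    using wdeg_leD[OF assms(1)] assms(2) unfolding wdeg_def by fastforce
  then have "p * i < p"
    by linarith
  then show "i = 0"
    by (cases i) auto
qed

lemma x_free_swap_xy_if_wdeg_le_below:
  assumes "wdeg_le p q (int q + e) F" "e < 0"
  shows "x_free (swap_xy F)"
  using x_free_if_wdeg_le_below[of q p e "swap_xy F"] assms by (simp add: wdeg_le_swap_xy)

lemma x_free_whomog_eq_monom2:
  fixes F :: "'a::field bipoly"
  assumes "F \<noteq> 0" "x_free F" "whomog p q M F" "1 \<le> q"
  shows "\<exists>c j. c \<noteq> 0 \<and> F = monom2 c 0 j"
proof -
  obtain c m where "c \<noteq> 0" and top: "wcomp p q (int (q * m)) F = monom2 c 0 m"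
    using x_free_top_monomial[OF assms(1,2,4)] by blast
  then have "M = int (q * m)"
    using wcomp_whomog_other[OF assms(3)] coeff2_monom2[of c 0 m 0 m] by fastforce
  then show ?thesis
    using assms(3) top \<open>c \<noteq> 0\<close> by (auto simp: whomog_def)
qed

lemma x_free_iff_dx_eq_0: "x_free F \<longleftrightarrow> dx (F :: 'a::field_char_0 bipoly) = 0"
proof -
  have "dx F = 0 \<longleftrightarrow> (\<forall>i j. coeff2 F (Suc i) j = 0)"
  proof
    assume "dx F = 0"
    then have "coeff2 (dx F) i j = 0" for i j
      by simp
    then show "\<forall>i j. coeff2 F (Suc i) j = 0"
      by (simp add: coeff2_dx del: of_nat_Suc)
  next
    assume "\<forall>i j. coeff2 F (Suc i) j = 0"
    then show "dx F = 0"
      by (intro coeff2_eqI) (simp add: coeff2_dx)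
  qed
  also have "\<dots> \<longleftrightarrow> x_free F"
    unfolding x_free_def
  proof (intro iffI allI impI)
    fix i j
    assume "\<forall>i j. coeff2 F (Suc i) j = 0" "coeff2 F i j \<noteq> 0"
    then show "i = 0"
      by (cases i) auto
  qed auto
  finally show ?thesis ..
qed

lemma x_free_swap_xy_iff_dy_eq_0: "x_free (swap_xy F) \<longleftrightarrow> dy (F :: 'a::field_char_0 bipoly) = 0"
proof -
  have "dx (swap_xy F) = swap_xy (dy F)"
    using fun_cong[OF conj_der_swap_xy_dy, of "swap_xy F"]
    by (simp add: conj_der_apply[OF alg_auto_swap_xy])
  then show ?thesis
    by (simp add: x_free_iff_dx_eq_0)
qed


section \<open>Obstructions for locally nilpotent derivations\<close>

lemma lnd_image_eq_0_if_dvd: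
  fixes E :: "'a::field_char_0 bipoly \<Rightarrow> 'a bipoly"
  assumes "is_LND E" "E w = w * h"
  shows "E w = 0"
proof (rule ccontr)
  assume "E w \<noteq> 0"
  then have "w \<noteq> 0" "h \<noteq> 0"
    using assms(2) der_0[OF is_LND_derivation[OF assms(1)]] by auto
  then have "lnd_deg E (E w) = lnd_deg E w + lnd_deg E h"
    using assms(2) lnd_deg_mult[OF assms(1)] by simp
  moreover have "lnd_deg E (E w) = lnd_deg E w - 1" "lnd_deg E w \<noteq> 0"
    using lnd_deg_der[OF assms(1)] lnd_deg_eq_0_iff[OF assms(1)] \<open>E w \<noteq> 0\<close> by auto
  ultimately show False
    by linarith
qed

lemma x_free_image_var_x:
  fixes E :: "'a::field_char_0 bipoly \<Rightarrow> 'a bipoly"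
  assumes "is_LND E" "E var_y = 0"
  shows "x_free (E var_x)"
proof -
  have "E (E var_x) = der_xy (E var_x) (E var_y) (E var_x)"
    by (rule fun_cong[OF derivation_eq_der_xy[OF is_LND_derivation[OF assms(1)]]])
  also have "\<dots> = E var_x * dx (E var_x)"
    by (simp add: der_xy_def assms(2) mult.commute)
  finally have "E (E var_x) = E var_x * dx (E var_x)" .
  then have "E var_x * dx (E var_x) = 0"
    using lnd_image_eq_0_if_dvd[OF assms(1)] by metis
  then show ?thesis
    by (auto simp: x_free_iff_dx_eq_0 der_0[OF derivation_dx])
qed

lemma x_free_swap_image_var_y:
  fixes E :: "'a::field_char_0 bipoly \<Rightarrow> 'a bipoly"
  assumes "is_LND E" "E var_x = 0"
  shows "x_free (swap_xy (E var_y))"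
proof -
  have "E (E var_y) = der_xy (E var_x) (E var_y) (E var_y)"
    by (rule fun_cong[OF derivation_eq_der_xy[OF is_LND_derivation[OF assms(1)]]])
  also have "\<dots> = E var_y * dy (E var_y)"
    by (simp add: der_xy_def assms(2) mult.commute)
  finally have "E (E var_y) = E var_y * dy (E var_y)" .
  then have "E var_y * dy (E var_y) = 0"
    using lnd_image_eq_0_if_dvd[OF assms(1)] by metis
  then show ?thesis
    by (auto simp: x_free_swap_xy_iff_dy_eq_0 der_0[OF derivation_dy])
qed

lemma lnd_images_not_cross_divisible:
  fixes E :: "'a::field_char_0 bipoly \<Rightarrow> 'a bipoly"
  assumes "is_LND E" "E var_x \<noteq> 0" "E var_y \<noteq> 0" "var_y dvd E var_x" "var_x dvd E var_y"
  shows False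
proof -
  obtain A B where A: "E var_x = var_y * A" and B: "E var_y = var_x * B"
    using assms(4,5) by (elim dvdE)
  then have "A \<noteq> 0" "B \<noteq> 0"
    using assms(2,3) by auto
  have "lnd_deg E var_x - 1 = lnd_deg E var_y + lnd_deg E A"
    using lnd_deg_der[OF assms(1), of var_x] lnd_deg_mult[OF assms(1), of var_y A] A \<open>A \<noteq> 0\<close> by simp
  moreover have "lnd_deg E var_y - 1 = lnd_deg E var_x + lnd_deg E B"
    using lnd_deg_der[OF assms(1), of var_y] lnd_deg_mult[OF assms(1), of var_x B] B \<open>B \<noteq> 0\<close> by simp
  moreover have "lnd_deg E var_x \<noteq> 0" "lnd_deg E var_y \<noteq> 0"
    using assms(2,3) lnd_deg_eq_0_iff[OF assms(1)] by auto
  ultimately show False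
    by linarith
qed

lemma whomog_coprime_support:
  assumes "coprime p q" "whomog p q W h"
    and "coeff2 h 0 j0 \<noteq> 0" "coeff2 h i0 0 \<noteq> 0" "coeff2 h i j \<noteq> 0"
  shows "p dvd j \<and> q dvd i"
proof -
  have "int (p * i + q * j) = W" "int (p * i0 + q * 0) = W" "int (p * 0 + q * j0) = W"
    using whomogD[OF assms(2)] assms(3-5) by blast+
  then have "p * i + q * j = p * i0" "p * i + q * j = q * j0"
    by (simp_all only: mult_0_right add_0_right add_0 flip: of_nat_eq_iff)
  then have "q * j = p * (i0 - i)" "p * i = q * (j0 - j)"
    by (simp_all add: diff_mult_distrib2)
  then have "p dvd q * j" "q dvd p * i"
    by simp_all
  then show ?thesis
    using assms(1) by (simp add: coprime_dvd_mult_right_iff coprime_commute[of p q])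
qed

text \<open>A weighted homogeneous kernel element of nonzero weight of a weighted homogeneous LND
  \<open>A \<partial>\<^sub>x + B \<partial>\<^sub>y\<close> (coprime weights \<open>\<ge> 2\<close>) forces \<open>y | A\<close> and \<open>x | B\<close>: its monomials
  \<open>x\<^sup>i y\<^sup>j\<close> all have \<open>q | i\<close> and \<open>p | j\<close>, so \<open>x | \<partial>\<^sub>x h\<close> and \<open>y | \<partial>\<^sub>y h\<close>, while
  \<open>y \<nmid> \<partial>\<^sub>x h\<close> and \<open>x \<nmid> \<partial>\<^sub>y h\<close>.\<close>
lemma whomog_kernel_cross_divisibility:
  fixes A B h :: "'a::field_char_0 bipoly"
  assumes "2 \<le> p" "2 \<le> q" "coprime p q" and lnd: "is_LND (der_xy A B)" and "A \<noteq> 0" "B \<noteq> 0"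
    and "h \<noteq> 0" "whomog p q W h" "W \<noteq> 0" and kernel: "der_xy A B h = 0"
  shows "var_y dvd A \<and> var_x dvd B"
proof -
  have not_dvd: "\<not> v dvd h" if "der_xy A B v \<noteq> 0" for v
    using that lnd_kernel_factor[OF lnd, of v] kernel \<open>h \<noteq> 0\<close> by (auto elim!: dvdE)
  obtain j0 where j0: "coeff2 h 0 j0 \<noteq> 0"
    using not_dvd[of var_x] \<open>A \<noteq> 0\<close> var_x_dvd_iff_coeff2 by auto
  obtain i0 where i0: "coeff2 h i0 0 \<noteq> 0"
    using not_dvd[of var_y] \<open>B \<noteq> 0\<close> var_y_dvd_iff_coeff2 by auto
  have "i0 \<noteq> 0"
    using whomogD[OF assms(8) i0] \<open>W \<noteq> 0\<close> by auto
  have "j0 \<noteq> 0"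
    using whomogD[OF assms(8) j0] \<open>W \<noteq> 0\<close> by auto
  note support = whomog_coprime_support[OF assms(3,8) j0 i0]
  have "var_y dvd dy h"
    using support[of _ 1] \<open>2 \<le> p\<close>
    by (auto simp: var_y_dvd_iff_coeff2 coeff2_dy simp del: of_nat_Suc)
  moreover have "\<not> var_y dvd dx h"
    using i0 \<open>i0 \<noteq> 0\<close> by (auto simp: var_y_dvd_iff_coeff2 coeff2_dx intro!: exI[of _ "i0 - 1"])
  moreover have "var_x dvd dx h"
    using support[of 1] \<open>2 \<le> q\<close> by (auto simp: var_x_dvd_iff_coeff2 coeff2_dx simp del: of_nat_Suc)
  moreover have "\<not> var_x dvd dy h"
    using j0 \<open>j0 \<noteq> 0\<close> by (auto simp: var_x_dvd_iff_coeff2 coeff2_dy intro!: exI[of _ "j0 - 1"])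
  moreover have "dx h * A = - (dy h * B)"
    using kernel by (simp add: der_xy_def eq_neg_iff_add_eq_0)
  ultimately show ?thesis
    by (metis dvd_minus_iff dvd_mult2 var_x_dvd_multD var_y_dvd_multD)
qed

lemma var_y_dvd_if_whomog_below:
  assumes "whomog p q (int p + e) A" "e < 0" "e \<noteq> - int p"
  shows "var_y dvd (A :: 'a::field bipoly)"
proof -
  have "coeff2 A i 0 = 0" for i
  proof (rule ccontr)
    assume "coeff2 A i 0 \<noteq> 0"
    then have "int (p * i) = int p + e"
      using whomogD[OF assms(1)] by fastforce
    moreover have "i = 0 \<or> int p \<le> int (p * i)"
      by (cases i) auto
    ultimately show False
      using assms(2,3) by auto
  qed
  then show ?thesis
    by (simp add: var_y_dvd_iff_coeff2)
qed

lemma var_x_dvd_if_whomog_below: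
  assumes "whomog p q (int q + e) B" "e < 0" "e \<noteq> - int q"
  shows "var_x dvd (B :: 'a::field bipoly)"
proof -
  have "coeff2 B 0 j = 0" for j
  proof (rule ccontr)
    assume "coeff2 B 0 j \<noteq> 0"
    then have "int (q * j) = int q + e"
      using whomogD[OF assms(1)] by fastforce
    moreover have "j = 0 \<or> int q \<le> int (q * j)"
      by (cases j) auto
    ultimately show False
      using assms(2,3) by auto
  qed
  then show ?thesis
    by (simp add: var_x_dvd_iff_coeff2)
qed

lemma whomog_cross_divisibility_if_weights_vanish:
  fixes A B :: "'a::field bipoly"
  assumes "2 \<le> p" "2 \<le> q" "coprime p q" "whomog p q (int p + e) A" "whomog p q (int q + e) B"
    and weights: "int p + int a * e = 0" "int q + int b * e = 0"
  shows "var_y dvd A \<and> var_x dvd B"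
proof -
  have "e < 0"
  proof (rule ccontr)
    assume "\<not> e < 0"
    then have "0 \<le> int a * e"
      by simp
    then show False
      using weights \<open>2 \<le> p\<close> by linarith
  qed
  have "e \<noteq> - int p"
  proof
    assume "e = - int p"
    then have "q = b * p"
      using weights by (simp add: algebra_simps flip: of_nat_mult)
    then show False
      using \<open>coprime p q\<close> \<open>2 \<le> p\<close> by simp
  qed
  moreover have "e \<noteq> - int q"
  proof
    assume "e = - int q"
    then have "p = a * q"
      using weights by (simp add: algebra_simps flip: of_nat_mult)
    then show False
      using \<open>coprime p q\<close> \<open>2 \<le> q\<close> by simp
  qed
  ultimately show ?thesis
    using var_y_dvd_if_whomog_below[OF assms(4) \<open>e < 0\<close>]
      var_x_dvd_if_whomog_below[OF assms(5) \<open>e < 0\<close>]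
    by blast
qed

text \<open>Iterating the derivation on \<open>x\<close> and \<open>y\<close> up to their degrees gives two weighted
  homogeneous kernel elements, and either of them or the weights force \<open>y | A\<close> and \<open>x | B\<close>.\<close>
lemma not_is_LND_whomog:
  fixes A B :: "'a::field_char_0 bipoly"
  assumes "2 \<le> p" "2 \<le> q" "coprime p q"
    and A: "whomog p q (int p + e) A" and B: "whomog p q (int q + e) B" and "A \<noteq> 0" "B \<noteq> 0"
  shows "\<not> is_LND (der_xy A B)"
proof
  assume lnd: "is_LND (der_xy A B)"
  let ?E = "der_xy A B"
  define a where "a = lnd_deg ?E var_x"
  define b where "b = lnd_deg ?E var_y"
  define hx where "hx = (?E ^^ a) var_x"
  define hy where "hy = (?E ^^ b) var_y"
  have kernel: "?E hx = 0" "?E hy = 0"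
    using der_iter_lnd_deg_Suc[OF lnd] by (simp_all add: hx_def hy_def a_def b_def funpow_Suc_outer)
  have "hx \<noteq> 0" "hy \<noteq> 0"
    using der_iter_lnd_deg_neq_0[OF lnd] by (simp_all add: hx_def hy_def a_def b_def)
  have hom: "whomog p q (int p + int a * e) hx" "whomog p q (int q + int b * e) hy"
    unfolding hx_def hy_def
    by (rule whomog_der_xy_iter[OF A B whomog_var_x], rule whomog_der_xy_iter[OF A B whomog_var_y])
  have "var_y dvd A \<and> var_x dvd B"
    using whomog_cross_divisibility_if_weights_vanish[OF assms(1-5)]
      whomog_kernel_cross_divisibility[OF assms(1-3) lnd \<open>A \<noteq> 0\<close> \<open>B \<noteq> 0\<close>]
      \<open>hx \<noteq> 0\<close> \<open>hy \<noteq> 0\<close> hom kernel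
    by blast
  then show False
    using lnd_images_not_cross_divisible[OF lnd] \<open>A \<noteq> 0\<close> \<open>B \<noteq> 0\<close> by simp
qed


section \<open>Lowering the degree of \<open>x\<close> by a triangular substitution\<close>

text \<open>\<open>e\<close> is the amount by which \<open>D\<close> raises \<open>(p, q)\<close>-weighted degrees; \<open>top\<close> says that
  it is attained.\<close>
locale lnd_weights = lnd_weight_bound +
  fixes e :: int
  assumes deg_x: "lnd_deg D var_x = g * p" and deg_y: "lnd_deg D var_y = g * q"
    and q_pos: "1 \<le> q" and q_le_p: "q \<le> p" and coprime: "coprime p q"
    and wdeg_x: "wdeg_le p q (int p + e) (D var_x)" and wdeg_y: "wdeg_le p q (int q + e) (D var_y)"
    and top: "wcomp p q (int p + e) (D var_x) \<noteq> 0 \<or> wcomp p q (int q + e) (D var_y) \<noteq> 0"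
begin

lemma der: "is_derivation D"
  by (rule is_LND_derivation[OF lnd])

lemma top_x_neq_0: "divided_power D (g * p) var_x \<noteq> 0"
  and top_y_neq_0: "divided_power D (g * q) var_y \<noteq> 0"
  using divided_power_var_x_neq_0 divided_power_var_y_neq_0 by (simp_all add: deg_x deg_y)

lemma image_var_x_neq_0: "D var_x \<noteq> 0"
  and image_var_y_neq_0: "D var_y \<noteq> 0"
  using lnd_deg_eq_0_iff[OF lnd, of var_x] lnd_deg_eq_0_iff[OF lnd, of var_y] deg_x deg_y g_pos
    q_pos q_le_p
  by auto

lemma lnd_deg_images: "lnd_deg D (D var_x) = g * p - 1" "lnd_deg D (D var_y) = g * q - 1"
  by (simp_all add: lnd_deg_der[OF lnd] deg_x deg_y)

text \<open>For negative \<open>e\<close>, \<open>D x\<close> and \<open>D y\<close> lie in \<open>k[y]\<close> and \<open>k[x]\<close>; comparing the degrees of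
  their leading monomials with \<open>deg x - 1\<close> and \<open>deg y - 1\<close> shows that \<open>D y\<close> is a nonzero constant.\<close>
lemma negative_weight_image_var_y_const:
  assumes "e < 0"
  shows "g = 1" "q = 1" "\<exists>c. c \<noteq> 0 \<and> D var_y = const2 c"
proof -
  have "x_free (swap_xy (D var_y))"
    by (rule x_free_swap_xy_if_wdeg_le_below[OF wdeg_y assms])
  moreover have "1 \<le> p"
    using q_pos q_le_p by simp
  ultimately obtain c n where "c \<noteq> 0" and wdeg: "wdeg_le p q (int (p * n)) (D var_y)"
    and top: "wcomp p q (int (p * n)) (D var_y) = monom2 c n 0"
    using x_free_swap_xy_top_monomial[OF image_var_y_neq_0] by blast
  note deg = lnd_deg_of_monomial_top[OF wdeg top \<open>c \<noteq> 0\<close> top_x_neq_0 top_y_neq_0]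
  have "g * q - 1 = g * (p * n)"
    using deg(1) lnd_deg_images(2) by simp
  have "g * q \<le> g * p" "1 \<le> g * q"
    using q_le_p g_pos q_pos by simp_all
  have "n = 0"
  proof (rule ccontr)
    assume "n \<noteq> 0"
    then have "g * p \<le> g * (p * n)"
      by simp
    then show False
      using \<open>g * q - 1 = g * (p * n)\<close> \<open>g * q \<le> g * p\<close> \<open>1 \<le> g * q\<close> by linarith
  qed
  then have "g * q - 1 = 0"
    using \<open>g * q - 1 = g * (p * n)\<close> by simp
  then have "g * q = 1"
    using \<open>1 \<le> g * q\<close> by linarith
  then show "g = 1" "q = 1"
    by simp_all
  show "\<exists>c. c \<noteq> 0 \<and> D var_y = const2 c"
    using deg(2) \<open>n = 0\<close> \<open>c \<noteq> 0\<close> by (auto simp: divided_power_0[OF der])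
qed

lemma triangular_drop_if_negative_weight:
  assumes "e < 0"
  shows "\<exists>k c. 1 \<le> k \<and> (D ^^ (g * p)) (var_x - const2 c * var_y ^ k) = 0"
proof -
  have gq: "g = 1" "q = 1"
    using negative_weight_image_var_y_const(1,2)[OF assms] by simp_all
  obtain cy where "cy \<noteq> 0" and Dy: "D var_y = const2 cy"
    using negative_weight_image_var_y_const(3)[OF assms] by blast
  have top_y: "divided_power D (g * q) var_y = const2 cy"
    by (simp only: gq mult_1 divided_power_1[OF der] Dy)
  have "x_free (D var_x)"
    by (rule x_free_if_wdeg_le_below[OF wdeg_x assms])
  then obtain cx m where "cx \<noteq> 0" and wdeg: "wdeg_le p q (int (q * m)) (D var_x)"
    and top: "wcomp p q (int (q * m)) (D var_x) = monom2 cx 0 m"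
    using x_free_top_monomial image_var_x_neq_0 q_pos by blast
  note deg = lnd_deg_of_monomial_top[OF wdeg top \<open>cx \<noteq> 0\<close> top_x_neq_0 top_y_neq_0]
  have "1 \<le> p" "m = p - 1"
    using q_le_p deg(1) lnd_deg_images(1) by (simp_all add: gq)
  have "divided_power D (p - 1) (D var_x) = const2 (cx * cy ^ (p - 1))"
    using deg(2) unfolding top_y by (simp add: gq \<open>m = p - 1\<close> const2_mult const2_power)
  then have top_x: "divided_power D p var_x = const2 (inverse (of_nat p) * cx * cy ^ (p - 1))"
    using divided_power_Suc[OF der, of "p - 1" var_x] \<open>1 \<le> p\<close> by (simp add: const2_mult mult.assoc)
  have "divided_power D (p * (g * q)) (var_y ^ p) = divided_power D (g * q) var_y ^ p"
    using divided_power_power[OF der kills_var_y] by blast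
  then have y_power: "divided_power D p (var_y ^ p) = const2 (cy ^ p)"
    unfolding top_y by (simp add: gq const2_power)
  define c where "c = cx / (of_nat p * cy)"
  have "cy ^ p = cy * cy ^ (p - 1)"
    using \<open>1 \<le> p\<close> by (simp add: power_eq_if)
  then have "inverse (of_nat p) * cx * cy ^ (p - 1) - c * cy ^ p = 0"
    using \<open>cy \<noteq> 0\<close> \<open>1 \<le> p\<close> by (simp add: c_def field_simps)
  then have "divided_power D p (var_x - const2 c * var_y ^ p) = 0"
    by (simp add: divided_power_diff[OF der] divided_power_const2_mult[OF der] top_x y_power
        flip: const2_mult const2_diff)
  then show ?thesis
    using \<open>1 \<le> p\<close> by (auto simp: gq divided_power_eq_0_iff[OF der])
qed

lemma leading_parts_vanish:
  assumes "0 \<le> e"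
  shows "subst_xy (divided_power D (g * p) var_x) (divided_power D (g * q) var_y)
    (wcomp p q (int p + e) (D var_x)) = 0"
    and "subst_xy (divided_power D (g * p) var_x) (divided_power D (g * q) var_y)
      (wcomp p q (int q + e) (D var_y)) = 0"
proof -
  have vanish: "divided_power D (g * (r + nat e)) (D v) = 0" if "lnd_deg D v = g * r" "1 \<le> r"
    for v r
  proof -
    have "1 \<le> g * r"
      using that g_pos by simp
    moreover have "g * r \<le> g * (r + nat e)"
      by simp
    ultimately have "lnd_deg D (D v) < g * (r + nat e)"
      using lnd_deg_der[OF lnd, of v] that(1) by linarith
    then show ?thesis
      by (simp add: divided_power_eq_0_iff[OF der] der_iter_eq_0_iff[OF lnd])
  qed
  have ep: "int (p + nat e) = int p + e" "int (q + nat e) = int q + e"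
    using assms by simp_all
  have "1 \<le> p"
    using q_pos q_le_p by simp
  show "subst_xy (divided_power D (g * p) var_x) (divided_power D (g * q) var_y)
      (wcomp p q (int p + e) (D var_x)) = 0"
    using divided_power_leading_form[of "p + nat e" "D var_x"] vanish[OF deg_x \<open>1 \<le> p\<close>] wdeg_x
    unfolding ep by simp
  show "subst_xy (divided_power D (g * p) var_x) (divided_power D (g * q) var_y)
      (wcomp p q (int q + e) (D var_y)) = 0"
    using divided_power_leading_form[of "q + nat e" "D var_y"] vanish[OF deg_y q_pos] wdeg_y
    unfolding ep by simp
qed

lemma triangular_drop_if_q_eq_1:
  assumes "0 \<le> e" "q = 1"
  shows "\<exists>k c. 1 \<le> k \<and> (D ^^ (g * p)) (var_x - const2 c * var_y ^ k) = 0"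
proof -
  let ?top_x = "divided_power D (g * p) var_x" and ?top_y = "divided_power D (g * q) var_y"
  have "1 \<le> p"
    using q_pos q_le_p by simp
  have "\<exists>N F. F \<noteq> 0 \<and> whomog p 1 (int N) F \<and> subst_xy ?top_x ?top_y F = 0"
  proof (cases "wcomp p q (int p + e) (D var_x) = 0")
    case False
    moreover have "int (p + nat e) = int p + e"
      using assms by simp
    ultimately show ?thesis
      using whomog_wcomp leading_parts_vanish(1)[OF assms(1)] assms(2) by metis
  next
    case True
    moreover have "int (1 + nat e) = int q + e"
      using assms by simp
    ultimately show ?thesis
      using top whomog_wcomp leading_parts_vanish(2)[OF assms(1)] assms(2) by metis
  qed
  then obtain N F where "F \<noteq> 0" "whomog p 1 (int N) F" "subst_xy ?top_x ?top_y F = 0"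
    by blast
  then obtain c where c: "?top_x = const2 c * ?top_y ^ p"
    using power_proportional_if_whomog_relation[OF \<open>1 \<le> p\<close>] top_y_neq_0 by blast
  have "divided_power D (p * (g * q)) (var_y ^ p) = ?top_y ^ p"
    using divided_power_power[OF der kills_var_y] by blast
  then have "divided_power D (g * p) (var_x - const2 c * var_y ^ p) = 0"
    by (simp add: divided_power_diff[OF der] divided_power_const2_mult[OF der] c assms(2)
      mult.commute)
  then show ?thesis
    using \<open>1 \<le> p\<close> by (auto simp: divided_power_eq_0_iff[OF der])
qed

lemma is_LND_leading_parts:
  "is_LND (der_xy (wcomp p q (int p + e) (D var_x)) (wcomp p q (int q + e) (D var_y)))"
  by (rule is_LND_leading_part[OF _ wdeg_x wdeg_y])
    (simp only: lnd flip: derivation_eq_der_xy[OF der])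

text \<open>For \<open>e \<ge> 0\<close> a single nonzero leading part would be a monomial, which does not vanish
  at the top divided powers of \<open>x\<close> and \<open>y\<close>.\<close>
lemma leading_parts_neq_0:
  assumes "0 \<le> e"
  shows "wcomp p q (int p + e) (D var_x) \<noteq> 0" "wcomp p q (int q + e) (D var_y) \<noteq> 0"
proof -
  define P where "P = wcomp p q (int p + e) (D var_x)"
  define Q where "Q = wcomp p q (int q + e) (D var_y)"
  note lnd' = is_LND_leading_parts[folded P_def Q_def]
  have hom: "whomog p q (int p + e) P" "whomog p q (int q + e) Q"
    by (simp_all add: P_def Q_def whomog_wcomp)
  note vanish = leading_parts_vanish[OF assms, folded P_def Q_def]
  have "P \<noteq> 0 \<or> Q \<noteq> 0"
    using top by (simp add: P_def Q_def)
  moreover have False if "P \<noteq> 0" "Q = 0"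
  proof -
    have "x_free P"
      using x_free_image_var_x[OF lnd'] that by simp
    then obtain c j where "c \<noteq> 0" "P = monom2 c 0 j"
      using x_free_whomog_eq_monom2[OF \<open>P \<noteq> 0\<close> _ hom(1)] q_pos by blast
    then show False
      using vanish(1) top_y_neq_0 by (simp add: subst_xy_monom2)
  qed
  moreover have False if "P = 0" "Q \<noteq> 0"
  proof -
    have "x_free (swap_xy Q)"
      using x_free_swap_image_var_y[OF lnd'] that by simp
    moreover have "whomog q p (int q + e) (swap_xy Q)"
      using hom(2) by (simp add: whomog_swap_xy)
    moreover have "swap_xy Q \<noteq> 0" "1 \<le> p"
      using \<open>Q \<noteq> 0\<close> q_pos q_le_p by simp_all
    ultimately obtain c j where "c \<noteq> 0" "swap_xy Q = monom2 c 0 j"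
      using x_free_whomog_eq_monom2 by blast
    then have "Q = monom2 c j 0"
      using swap_xy_swap_xy[of Q] by (simp add: swap_xy_monom2)
    then show False
      using vanish(2) top_x_neq_0 \<open>c \<noteq> 0\<close> by (simp add: subst_xy_monom2)
  qed
  ultimately show "wcomp p q (int p + e) (D var_x) \<noteq> 0" "wcomp p q (int q + e) (D var_y) \<noteq> 0"
    unfolding P_def Q_def by blast+
qed

lemma q_eq_1_if_nonnegative_weight:
  assumes "0 \<le> e"
  shows "q = 1"
proof (rule ccontr)
  assume "q \<noteq> 1"
  then have "2 \<le> q" "2 \<le> p"
    using q_pos q_le_p by simp_all
  then show False
    using not_is_LND_whomog[OF _ _ coprime whomog_wcomp whomog_wcomp leading_parts_neq_0[OF assms]]
      is_LND_leading_parts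
    by blast
qed

end

lemma lnd_deg_var_x_triangular_drop:
  fixes D :: "'a::field_char_0 bipoly \<Rightarrow> 'a bipoly"
  assumes lnd: "is_LND D" and "1 \<le> lnd_deg D var_y" "lnd_deg D var_y \<le> lnd_deg D var_x"
  shows "\<exists>k c. 1 \<le> k \<and> (D ^^ lnd_deg D var_x) (var_x - const2 c * var_y ^ k) = 0"
proof -
  define g where "g = gcd (lnd_deg D var_x) (lnd_deg D var_y)"
  define p where "p = lnd_deg D var_x div g"
  define q where "q = lnd_deg D var_y div g"
  have "1 \<le> g"
    using assms(2) by (simp add: g_def Suc_le_eq)
  have deg: "lnd_deg D var_x = g * p" "lnd_deg D var_y = g * q"
    by (simp_all add: g_def p_def q_def)
  have "coprime p q"
    unfolding p_def q_def g_def by (rule div_gcd_coprime) (use assms(2) in simp)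
  have "1 \<le> q" "q \<le> p"
    using assms(2,3) \<open>1 \<le> g\<close> deg by (auto simp: Suc_le_eq)
  have "D var_x \<noteq> 0"
    using assms(2,3) lnd_deg_eq_0_iff[OF lnd, of var_x] by simp
  then obtain e where "wdeg_le p q (int p + e) (D var_x)" "wdeg_le p q (int q + e) (D var_y)"
    "wcomp p q (int p + e) (D var_x) \<noteq> 0 \<or> wcomp p q (int q + e) (D var_y) \<noteq> 0"
    using exists_wdeg_top by blast
  then interpret lnd_weights D g p q e
    using lnd \<open>1 \<le> g\<close> der_iter_lnd_deg_Suc[OF lnd, of var_x]
      der_iter_lnd_deg_Suc[OF lnd, of var_y] deg \<open>1 \<le> q\<close> \<open>q \<le> p\<close> \<open>coprime p q\<close>
    by unfold_locales simp_all
  show ?thesis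
    using triangular_drop_if_negative_weight triangular_drop_if_q_eq_1 q_eq_1_if_nonnegative_weight
    by (cases "e < 0") (simp_all add: deg)
qed


section \<open>Chains of derivations\<close>

definition c_step ::
    "('a::field_char_0 bipoly \<Rightarrow> 'a bipoly) \<Rightarrow> ('a bipoly \<Rightarrow> 'a bipoly) \<Rightarrow> ('a bipoly \<Rightarrow> 'a bipoly)
      \<Rightarrow> bool" where
  "c_step E1 E2 E3 \<longleftrightarrow> E1 \<circ> E2 = E2 \<circ> E1 \<and>
     (\<exists>a b. a \<in> ker_der E1 \<inter> ker_der E2 \<and> b \<in> ker_der E2 \<and> E3 = (\<lambda>f. a * E1 f + b * E2 f))"

definition c_chain :: "('a::field_char_0 bipoly \<Rightarrow> 'a bipoly) list \<Rightarrow> bool" where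
  "c_chain ds \<longleftrightarrow> (\<forall>D\<in>set ds. is_LND D \<and> irreducible_der D) \<and>
     (\<forall>j. j + 2 < length ds \<longrightarrow> c_step (ds ! j) (ds ! (j + 1)) (ds ! (j + 2)))"

lemma full_irreducible_C_chain_iff:
  "full_irreducible_C_chain ds \<longleftrightarrow> 2 \<le> length ds \<and> ds ! 0 = dx \<and> ds ! 1 = dy \<and> c_chain ds"
proof -
  have "(\<forall>j. 1 \<le> j \<and> j + 1 < length ds \<longrightarrow>
        ds ! (j - 1) \<circ> ds ! j = ds ! j \<circ> ds ! (j - 1) \<and>
        (\<exists>a b. a \<in> ker_der (ds ! (j - 1)) \<inter> ker_der (ds ! j) \<and> b \<in> ker_der (ds ! j) \<and>
           ds ! (j + 1) = (\<lambda>f. a * (ds ! (j - 1)) f + b * (ds ! j) f)))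
     \<longleftrightarrow> (\<forall>j. j + 2 < length ds \<longrightarrow> c_step (ds ! j) (ds ! (j + 1)) (ds ! (j + 2)))"
     (is "?shifted \<longleftrightarrow> ?steps")
  proof
    assume ?shifted
    show ?steps
    proof (intro allI impI)
      fix j
      assume "j + 2 < length ds"
      then show "c_step (ds ! j) (ds ! (j + 1)) (ds ! (j + 2))"
        using \<open>?shifted\<close>[rule_format, of "j + 1"] by (simp add: c_step_def)
    qed
  next
    assume ?steps
    show ?shifted
    proof (intro allI impI)
      fix j
      assume j: "1 \<le> j \<and> j + 1 < length ds"
      then obtain i where "j = Suc i"
        by (cases j) auto
      then show "ds ! (j - 1) \<circ> ds ! j = ds ! j \<circ> ds ! (j - 1) \<and>
          (\<exists>a b. a \<in> ker_der (ds ! (j - 1)) \<inter> ker_der (ds ! j) \<and> b \<in> ker_der (ds ! j) \<and>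
            ds ! (j + 1) = (\<lambda>f. a * (ds ! (j - 1)) f + b * (ds ! j) f))"
        using \<open>?steps\<close>[rule_format, of i] j by (simp add: c_step_def)
    qed
  qed
  then show ?thesis
    unfolding full_irreducible_C_chain_def c_chain_def by blast
qed

lemma c_step_conj_der:
  assumes "alg_auto \<phi> \<psi>" "c_step E1 E2 E3"
  shows "c_step (conj_der \<phi> \<psi> E1) (conj_der \<phi> \<psi> E2) (conj_der \<phi> \<psi> E3)"
proof -
  obtain a b
    where ab: "a \<in> ker_der E1 \<inter> ker_der E2" "b \<in> ker_der E2" "E3 = (\<lambda>f. a * E1 f + b * E2 f)"
    and "E1 \<circ> E2 = E2 \<circ> E1"
    using assms(2) by (auto simp: c_step_def)
  note hom = alg_auto_homs[OF assms(1)]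
  have "\<phi> a \<in> ker_der (conj_der \<phi> \<psi> E1) \<inter> ker_der (conj_der \<phi> \<psi> E2)"
      "\<phi> b \<in> ker_der (conj_der \<phi> \<psi> E2)"
    using ab alg_hom_0[OF hom(1)]
    by (simp_all add: ker_der_def conj_der_apply[OF assms(1)] alg_auto_inverse[OF assms(1)])
  moreover have "conj_der \<phi> \<psi> E3 = (\<lambda>f. \<phi> a * conj_der \<phi> \<psi> E1 f + \<phi> b * conj_der \<phi> \<psi> E2 f)"
    using ab(3)
    by (simp add: fun_eq_iff conj_der_apply[OF assms(1)] alg_hom_add[OF hom(1)]
        alg_hom_mult[OF hom(1)])
  ultimately show ?thesis
    using conj_der_commute[OF assms(1) \<open>E1 \<circ> E2 = E2 \<circ> E1\<close>] unfolding c_step_def by blast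
qed

lemma c_chain_map_conj_der:
  assumes "alg_auto \<phi> \<psi>" "c_chain ds"
  shows "c_chain (map (conj_der \<phi> \<psi>) ds)"
  using assms(2) is_LND_conj_der[OF assms(1)] irreducible_der_conj_der[OF assms(1)]
    c_step_conj_der[OF assms(1)]
  unfolding c_chain_def by auto

lemma c_chain_glue:
  assumes "c_chain (pre @ [E1, E2])" "c_chain (E1 # E2 # rest)"
  shows "c_chain (pre @ E1 # E2 # rest)"
  unfolding c_chain_def
proof (intro conjI allI impI)
  show "\<forall>D\<in>set (pre @ E1 # E2 # rest). is_LND D \<and> irreducible_der D"
    using assms unfolding c_chain_def by auto
next
  fix j
  assume j: "j + 2 < length (pre @ E1 # E2 # rest)"
  show "c_step ((pre @ E1 # E2 # rest) ! j) ((pre @ E1 # E2 # rest) ! (j + 1))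
      ((pre @ E1 # E2 # rest) ! (j + 2))"
  proof (cases "j < length pre")
    case True
    have "(pre @ E1 # E2 # rest) ! k = (pre @ [E1, E2]) ! k" if "k < length pre + 2" for k
      using that by (auto simp: nth_append nth_Cons split: nat.splits)
    then show ?thesis
      using assms(1) True unfolding c_chain_def by simp
  next
    case False
    then obtain i where "j = length pre + i"
      using le_Suc_ex not_less by blast
    then show ?thesis
      using assms(2) j unfolding c_chain_def by (simp add: nth_append add.assoc[symmetric])
  qed
qed

definition ends_full_chain :: "('a::field_char_0 bipoly \<Rightarrow> 'a bipoly) \<Rightarrow> bool" where
  "ends_full_chain D \<longleftrightarrow> (\<exists>ds. full_irreducible_C_chain ds \<and> last ds = D)"

text \<open>Automorphisms along which full chains can be transported (\<open>ends_full_chain_conj_der\<close>).\<close>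
definition chain_compatible ::
  "('a::field_char_0 bipoly \<Rightarrow> 'a bipoly) \<Rightarrow> ('a bipoly \<Rightarrow> 'a bipoly) \<Rightarrow> bool" where
  "chain_compatible \<phi> \<psi> \<longleftrightarrow>
     alg_auto \<phi> \<psi> \<and> (\<exists>pre. full_irreducible_C_chain (pre @ [conj_der \<phi> \<psi> dx, conj_der \<phi> \<psi> dy]))"

lemma ends_full_chain_conj_der:
  assumes "chain_compatible \<phi> \<psi>" "ends_full_chain E"
  shows "ends_full_chain (conj_der \<phi> \<psi> E)"
proof -
  obtain pre where auto: "alg_auto \<phi> \<psi>"
    and pre: "full_irreducible_C_chain (pre @ [conj_der \<phi> \<psi> dx, conj_der \<phi> \<psi> dy])"
    using assms(1) by (auto simp: chain_compatible_def)
  obtain ds where ds: "full_irreducible_C_chain ds" "last ds = E"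
    using assms(2) by (auto simp: ends_full_chain_def)
  then obtain rest where rest: "ds = dx # dy # rest"
    unfolding full_irreducible_C_chain_iff by (cases ds rule: remdups_adj.cases) auto
  define L where "L = pre @ map (conj_der \<phi> \<psi>) ds"
  have "c_chain (conj_der \<phi> \<psi> dx # conj_der \<phi> \<psi> dy # map (conj_der \<phi> \<psi>) rest)"
    using c_chain_map_conj_der[OF auto, of ds] ds(1) rest
    by (simp add: full_irreducible_C_chain_iff)
  moreover have "c_chain (pre @ [conj_der \<phi> \<psi> dx, conj_der \<phi> \<psi> dy])"
    using pre by (simp add: full_irreducible_C_chain_iff)
  ultimately have "c_chain L"
    unfolding L_def rest using c_chain_glue by fastforce
  moreover have "L ! k = (pre @ [conj_der \<phi> \<psi> dx, conj_der \<phi> \<psi> dy]) ! k" if "k < length pre + 2"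
    for k
    using that by (auto simp: L_def rest nth_append nth_Cons split: nat.splits)
  then have "L ! 0 = dx" "L ! 1 = dy"
    using pre by (simp_all add: full_irreducible_C_chain_iff)
  moreover have "2 \<le> length L" "last L = conj_der \<phi> \<psi> E"
    using ds(2) by (simp_all add: L_def rest last_map split: if_splits)
  ultimately show ?thesis
    unfolding ends_full_chain_def full_irreducible_C_chain_iff by blast
qed

lemma c_step_dx_dy_const: "c_step dx dy (der_xy (const2 a) (const2 b))"
  unfolding c_step_def
  by (intro conjI exI[of _ "const2 a"] exI[of _ "const2 b"])
    (simp_all add: dx_dy_commute ker_der_def der_const2[OF derivation_dx]
      der_const2[OF derivation_dy] der_xy_def fun_eq_iff mult.commute)

lemma c_step_dy_dx: "dx b = 0 \<Longrightarrow> c_step dy dx (der_xy b 1)"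
  unfolding c_step_def
  by (intro conjI exI[of _ 1] exI[of _ b])
    (simp_all add: dx_dy_commute[symmetric] ker_der_def der_1[OF derivation_dx]
      der_1[OF derivation_dy] der_xy_def fun_eq_iff mult.commute)

lemma c_step_dx_dy_dx: "c_step dx dy (dx :: 'a::field_char_0 bipoly \<Rightarrow> _)"
proof -
  have "der_xy (const2 1) (const2 0) = (dx :: 'a bipoly \<Rightarrow> _)"
    by (simp add: der_xy_def fun_eq_iff)
  moreover have "c_step dx dy (der_xy (const2 1) (const2 (0::'a)))"
    by (rule c_step_dx_dy_const)
  ultimately show ?thesis
    by (simp only:)
qed

lemma full_chain_dx_dy:
  assumes "is_LND D" "irreducible_der D" "c_step dx dy D"
  shows "full_irreducible_C_chain [dx, dy, D]"
  using assms is_LND_dx is_LND_dy irreducible_der_dx irreducible_der_dy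
  by (auto simp: full_irreducible_C_chain_iff c_chain_def less_Suc_eq)

lemma chain_compatible_swap_xy: "chain_compatible swap_xy swap_xy"
  unfolding chain_compatible_def
  using full_chain_dx_dy[OF is_LND_dx irreducible_der_dx c_step_dx_dy_dx]
  by (intro conjI alg_auto_swap_xy exI[of _ "[dx]"])
    (simp add: conj_der_swap_xy_dx conj_der_swap_xy_dy)

lemma chain_compatible_triang:
  assumes "1 \<le> k"
  shows "chain_compatible (triang c k) (triang_inv c k)"
proof -
  define G where "G = der_xy (const2 (c * of_nat k) * var_y ^ (k - 1)) 1"
  have G: "conj_der (triang c k) (triang_inv c k) dy = G"
    unfolding G_def by (rule conj_der_triang_dy[OF assms])
  have "is_LND G" "irreducible_der G"
    unfolding G[symmetric]
    by (rule is_LND_conj_der[OF alg_auto_triang is_LND_dy],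
        rule irreducible_der_conj_der[OF alg_auto_triang irreducible_der_dy])
  moreover have "c_step dy dx G"
    unfolding G_def
    by (rule c_step_dy_dx) (simp add: der_mult[OF derivation_dx] der_const2[OF derivation_dx])
  ultimately have "full_irreducible_C_chain [dx, dy, dx, G]"
    using c_step_dx_dy_dx is_LND_dx is_LND_dy irreducible_der_dx irreducible_der_dy
    by (auto simp: full_irreducible_C_chain_iff c_chain_def less_Suc_eq)
  then show ?thesis
    unfolding chain_compatible_def
    by (intro conjI alg_auto_triang exI[of _ "[dx, dy]"]) (simp add: conj_der_triang_dx G)
qed


lemma is_unit_if_dvd_image: "irreducible_der D \<Longrightarrow> (\<And>f. h dvd D f) \<Longrightarrow> is_unit h"
  unfolding irreducible_der_def by blast

lemma ends_full_chain_if_kills_var: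
  fixes D :: "'a::field_char_0 bipoly \<Rightarrow> 'a bipoly"
  assumes "is_LND D" "irreducible_der D" "D var_x = 0 \<or> D var_y = 0"
  shows "ends_full_chain D"
proof -
  define P Q where "P = D var_x" and "Q = D var_y"
  have D: "D = der_xy P Q"
    unfolding P_def Q_def by (rule derivation_eq_der_xy[OF is_LND_derivation[OF assms(1)]])
  have "is_unit Q" if "P = 0"
    by (rule is_unit_if_dvd_image[OF assms(2)]) (simp add: D der_xy_def that)
  moreover have "is_unit P" if "Q = 0"
    by (rule is_unit_if_dvd_image[OF assms(2)]) (simp add: D der_xy_def that)
  moreover have "P = 0 \<or> Q = 0"
    using assms(3) by (simp add: P_def Q_def)
  ultimately obtain a b where "P = const2 a" "Q = const2 b"
    using is_unit_bipoly_iff const2_0 by metis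
  then have "full_irreducible_C_chain [dx, dy, D]"
    using full_chain_dx_dy[OF assms(1,2)] c_step_dx_dy_const D by blast
  then show ?thesis
    unfolding ends_full_chain_def by (intro exI[of _ "[dx, dy, D]"]) simp
qed

text \<open>Conjugating by \<open>(x, y) \<mapsto> (x - c y\<^sup>k, y)\<close> replaces the degree of \<open>x\<close> by that of
  \<open>x - c y\<^sup>k\<close>, which is smaller by \<open>lnd_deg_var_x_triangular_drop\<close>.\<close>
lemma ends_full_chain_triangular_step:
  fixes D :: "'a::field_char_0 bipoly \<Rightarrow> 'a bipoly"
  assumes "is_LND D" "irreducible_der D" "1 \<le> lnd_deg D var_y" "lnd_deg D var_y \<le> lnd_deg D var_x"
    and IH: "\<And>E :: 'a bipoly \<Rightarrow> 'a bipoly. is_LND E \<Longrightarrow> irreducible_der E \<Longrightarrow>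
      lnd_deg E var_x + lnd_deg E var_y < lnd_deg D var_x + lnd_deg D var_y \<Longrightarrow> ends_full_chain E"
  shows "ends_full_chain D"
proof -
  obtain k c where "1 \<le> k" and drop: "(D ^^ lnd_deg D var_x) (var_x - const2 c * var_y ^ k) = 0"
    using lnd_deg_var_x_triangular_drop[OF assms(1,3,4)] by blast
  define E where "E = conj_der (triang_inv c k) (triang c k) D"
  note auto = alg_auto_sym[OF alg_auto_triang]
  have "lnd_deg E var_x = lnd_deg D (var_x - const2 c * var_y ^ k)"
      "lnd_deg E var_y = lnd_deg D var_y"
    unfolding E_def lnd_deg_conj_der[OF auto] by (simp_all add: triang_def)
  moreover have "lnd_deg D (var_x - const2 c * var_y ^ k) < lnd_deg D var_x"
    using drop assms(3,4) by (auto simp: der_iter_eq_0_iff[OF assms(1)] lnd_deg_0[OF assms(1)])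
  ultimately have "lnd_deg E var_x + lnd_deg E var_y < lnd_deg D var_x + lnd_deg D var_y"
    by simp
  moreover have "is_LND E" "irreducible_der E"
    unfolding E_def
    by (rule is_LND_conj_der[OF auto assms(1)], rule irreducible_der_conj_der[OF auto assms(2)])
  ultimately have "ends_full_chain E"
    using IH by blast
  then have "ends_full_chain (conj_der (triang c k) (triang_inv c k) E)"
    by (rule ends_full_chain_conj_der[OF chain_compatible_triang[OF \<open>1 \<le> k\<close>]])
  then show ?thesis
    by (simp add: E_def conj_der_cancel[OF auto])
qed

lemma ends_full_chain_swapped_step:
  fixes D :: "'a::field_char_0 bipoly \<Rightarrow> 'a bipoly"
  assumes "is_LND D" "irreducible_der D" "1 \<le> lnd_deg D var_x" "lnd_deg D var_x < lnd_deg D var_y"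
    and IH: "\<And>E :: 'a bipoly \<Rightarrow> 'a bipoly. is_LND E \<Longrightarrow> irreducible_der E \<Longrightarrow>
      lnd_deg E var_x + lnd_deg E var_y < lnd_deg D var_x + lnd_deg D var_y \<Longrightarrow> ends_full_chain E"
  shows "ends_full_chain D"
proof -
  define D' where "D' = conj_der swap_xy swap_xy D"
  have deg: "lnd_deg D' var_x = lnd_deg D var_y" "lnd_deg D' var_y = lnd_deg D var_x"
    unfolding D'_def lnd_deg_conj_der[OF alg_auto_swap_xy] by (simp_all add: swap_xy_def)
  have "is_LND D'" "irreducible_der D'"
    unfolding D'_def
    by (rule is_LND_conj_der[OF alg_auto_swap_xy assms(1)],
        rule irreducible_der_conj_der[OF alg_auto_swap_xy assms(2)])
  then have "ends_full_chain D'"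
    using ends_full_chain_triangular_step[of D'] IH deg assms(3,4) by (simp add: add.commute)
  then have "ends_full_chain (conj_der swap_xy swap_xy D')"
    by (rule ends_full_chain_conj_der[OF chain_compatible_swap_xy])
  then show ?thesis
    by (simp add: D'_def conj_der_cancel[OF alg_auto_swap_xy])
qed

theorem proposition3p9:
  fixes \<delta> :: "'a::field_char_0 bipoly \<Rightarrow> 'a bipoly"
  assumes "is_LND \<delta>" and "irreducible_der \<delta>"
  shows "\<exists>ds. full_irreducible_C_chain ds \<and> last ds = \<delta>"
  using assms
proof (induct "lnd_deg \<delta> var_x + lnd_deg \<delta> var_y" arbitrary: \<delta> rule: less_induct)
  case less
  have IH: "ends_full_chain E"
    if "is_LND E" "irreducible_der E"
      "lnd_deg E var_x + lnd_deg E var_y < lnd_deg \<delta> var_x + lnd_deg \<delta> var_y"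
    for E :: "'a bipoly \<Rightarrow> 'a bipoly"
    using less.hyps[OF that(3,1,2)] by (simp add: ends_full_chain_def)
  consider "\<delta> var_x = 0 \<or> \<delta> var_y = 0"
    | "1 \<le> lnd_deg \<delta> var_y" "lnd_deg \<delta> var_y \<le> lnd_deg \<delta> var_x"
    | "1 \<le> lnd_deg \<delta> var_x" "lnd_deg \<delta> var_x < lnd_deg \<delta> var_y"
    using lnd_deg_eq_0_iff[OF less.prems(1), of var_x]
      lnd_deg_eq_0_iff[OF less.prems(1), of var_y] by linarith
  then have "ends_full_chain \<delta>"
  proof cases
    case 1
    then show ?thesis
      by (rule ends_full_chain_if_kills_var[OF less.prems])
  next
    case 2
    then show ?thesis
      by (rule ends_full_chain_triangular_step[OF less.prems _ _ IH])
  next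
    case 3
    then show ?thesis
      by (rule ends_full_chain_swapped_step[OF less.prems _ _ IH])
  qed
  then show ?case
    by (simp add: ends_full_chain_def)
qed

end
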